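(* Let $D$ be a division algebra and let $\sigma_1,\ldots,\sigma_n$ be pairwise commuting automorphisms of $D$ such that $F=\mathcal{Z}(D)\cap\bigl(\bigcap_{i=1}^n D_{\sigma_i}\bigr)$ is infinite. If $\sigma_1^{d_1}=\cdots=\sigma_n^{d_n}$ for some positive integers $d_1,\ldots,d_n$, then the tuple $(\sigma_1,\ldots,\sigma_n)$ is automorphically normalizable over $D$. In particular, if $\sigma_1,\ldots,\sigma_n$ are of finite orders, then the tuple $(\sigma_1,\ldots,\sigma_n)$ is centrally normalizable over $D$.
   Context: All rings are associative with unity. $\mathcal{Z}(D)$ is the center of $D$ and $D_{\sigma}=\{r\in D:\sigma(r)=r\}$. For commuting automorphisms $\sigma_1,\ldots,\sigma_n$ of $D$, $D[t_1,\ldots,t_n;\sigma_1,\ldots,\sigma_n]$ denotes the skew polynomial ring in pairwise commuting variables with $t_ia=\sigma_i(a)t_i$ for $a\in D$. For a ring $S\supseteq D$, $a\in S$ is automorphic over $D$ with respect to $\tau\in\mathrm{Aut}(D)$ if $ab=\tau(b)a$ for all $b\in D$. $S$ is finite over a subring $R$ if finitely generated as a left $R$-module. Commuting $a_1,\ldots,a_m\in S$ are (left) algebraically independent over $D$ if the monomials in them are left linearly independent over $D$. $S$ is automorphically normalizable over $D$ if there exist $m\ge0$ and commuting $a_1,\ldots,a_m\in S$, automorphic over $D$ with respect to pairwise commuting automorphisms $\tau_1,\ldots,\tau_m$, left algebraically independent over $D$, with $S$ finite over the subring $D[a_1,\ldots,a_m]$ generated by $D\cup\{a_1,\ldots,a_m\}$;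 it is centrally normalizable if moreover the $\tau_i$ can be taken to be $\mathrm{id}_D$. A tuple $(\sigma_1,\ldots,\sigma_n)$ is automorphically (resp. centrally) normalizable over $D$ if every quotient of $D[t_1,\ldots,t_n;\sigma_1,\ldots,\sigma_n]$ by a proper two-sided ideal is automorphically (resp. centrally) normalizable over $D$. *)

theory Defs
  imports "HOL-Algebra.QuotRing" "HOL-Algebra.Generated_Rings"
begin

text \<open>The division ring D is the whole type 'a (class division_ring).
  Ring automorphisms of D: bijective, additive, multiplicative, unital.\<close>

definition ring_aut :: "('a::ring_1 \<Rightarrow> 'a) \<Rightarrow> bool" where
  "ring_aut f \<longleftrightarrow> bij f \<and> (\<forall>x y. f (x + y) = f x + f y)
     \<and> (\<forall>x y. f (x * y) = f x * f y) \<and> f 1 = 1"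

definition expvecs :: "nat \<Rightarrow> (nat \<Rightarrow> nat) set" where
  "expvecs n = {\<alpha>. \<forall>i\<ge>n. \<alpha> i = 0}"

fun spow :: "(nat \<Rightarrow> 'a \<Rightarrow> 'a) \<Rightarrow> nat \<Rightarrow> (nat \<Rightarrow> nat) \<Rightarrow> 'a \<Rightarrow> 'a" where
  "spow \<sigma> 0 \<alpha> = id"
| "spow \<sigma> (Suc k) \<alpha> = spow \<sigma> k \<alpha> \<circ> (\<sigma> k ^^ \<alpha> k)"

text \<open>Skew polynomials p = sum_alpha p(alpha) t^alpha (coefficients on the left),
  with t^alpha a = sigma^alpha(a) t^alpha and commuting variables, so
  (a t^alpha)(b t^beta) = a sigma^alpha(b) t^(alpha+beta).\<close>

definition skew_mult :: "(nat \<Rightarrow> 'a::ring_1 \<Rightarrow> 'a) \<Rightarrow> nat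
    \<Rightarrow> ((nat \<Rightarrow> nat) \<Rightarrow> 'a) \<Rightarrow> ((nat \<Rightarrow> nat) \<Rightarrow> 'a) \<Rightarrow> ((nat \<Rightarrow> nat) \<Rightarrow> 'a)" where
  "skew_mult \<sigma> n p q = (\<lambda>\<gamma>. \<Sum>\<alpha>\<in>{\<alpha>. p \<alpha> \<noteq> 0 \<and> (\<forall>i. \<alpha> i \<le> \<gamma> i)}.
       p \<alpha> * spow \<sigma> n \<alpha> (q (\<lambda>i. \<gamma> i - \<alpha> i)))"

definition skew_poly_ring :: "(nat \<Rightarrow> 'a::ring_1 \<Rightarrow> 'a) \<Rightarrow> nat \<Rightarrow> ((nat \<Rightarrow> nat) \<Rightarrow> 'a) ring" where
  "skew_poly_ring \<sigma> n =
    \<lparr>carrier = {p. finite {\<alpha>. p \<alpha> \<noteq> 0} \<and> (\<forall>\<alpha>. p \<alpha> \<noteq> 0 \<longrightarrow> \<alpha> \<in> expvecs n)},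
     mult = skew_mult \<sigma> n,
     one = (\<lambda>\<alpha>. if \<alpha> = (\<lambda>_. 0) then 1 else 0),
     zero = (\<lambda>_. 0),
     add = (\<lambda>p q \<alpha>. p \<alpha> + q \<alpha>)\<rparr>"

definition const_poly :: "'a::zero \<Rightarrow> ((nat \<Rightarrow> nat) \<Rightarrow> 'a)" where
  "const_poly d = (\<lambda>\<alpha>. if \<alpha> = (\<lambda>_. 0) then d else 0)"

fun smonom :: "('b, 'c) ring_scheme \<Rightarrow> (nat \<Rightarrow> 'b) \<Rightarrow> nat \<Rightarrow> (nat \<Rightarrow> nat) \<Rightarrow> 'b" where
  "smonom S a 0 \<alpha> = \<one>\<^bsub>S\<^esub>"
| "smonom S a (Suc k) \<alpha> = smonom S a k \<alpha> \<otimes>\<^bsub>S\<^esub> (a k [^]\<^bsub>S\<^esub> \<alpha> k)"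

definition normalizable_over ::
    "bool \<Rightarrow> ('b, 'c) ring_scheme \<Rightarrow> ('a::division_ring \<Rightarrow> 'b) \<Rightarrow> bool" where
  "normalizable_over central S \<iota> \<longleftrightarrow>
    (\<exists>(m::nat) (a::nat \<Rightarrow> 'b) (\<tau>::nat \<Rightarrow> 'a \<Rightarrow> 'a).
       (\<forall>i<m. a i \<in> carrier S)
     \<and> (\<forall>i<m. \<forall>j<m. a i \<otimes>\<^bsub>S\<^esub> a j = a j \<otimes>\<^bsub>S\<^esub> a i)
     \<and> (\<forall>i<m. ring_aut (\<tau> i))
     \<and> (\<forall>i<m. \<forall>j<m. \<tau> i \<circ> \<tau> j = \<tau> j \<circ> \<tau> i)
     \<and> (central \<longrightarrow> (\<forall>i<m. \<tau> i = id))
     \<and> (\<forall>i<m. \<forall>b. a i \<otimes>\<^bsub>S\<^esub> \<iota> b = \<iota> (\<tau> i b) \<otimes>\<^bsub>S\<^esub> a i)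
     \<and> (\<forall>c :: (nat \<Rightarrow> nat) \<Rightarrow> 'a.
          finite {\<alpha>. c \<alpha> \<noteq> 0} \<and> (\<forall>\<alpha>. c \<alpha> \<noteq> 0 \<longrightarrow> \<alpha> \<in> expvecs m)
          \<and> finsum S (\<lambda>\<alpha>. \<iota> (c \<alpha>) \<otimes>\<^bsub>S\<^esub> smonom S a m \<alpha>) {\<alpha>. c \<alpha> \<noteq> 0} = \<zero>\<^bsub>S\<^esub>
          \<longrightarrow> (\<forall>\<alpha>. c \<alpha> = 0))
     \<and> (\<exists>G. finite G \<and> G \<subseteq> carrier S \<and>
          (\<forall>s\<in>carrier S. \<exists>r. r \<in> G \<rightarrow> generate_ring S (range \<iota> \<union> a ` {..<m}) \<and>
              s = finsum S (\<lambda>g. r g \<otimes>\<^bsub>S\<^esub> g) G)))"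

abbreviation aut_normalizable_over where
  "aut_normalizable_over \<equiv> normalizable_over False"

abbreviation central_normalizable_over where
  "central_normalizable_over \<equiv> normalizable_over True"

definition tuple_normalizable :: "bool \<Rightarrow> nat \<Rightarrow> (nat \<Rightarrow> 'a::division_ring \<Rightarrow> 'a) \<Rightarrow> bool" where
  "tuple_normalizable central n \<sigma> \<longleftrightarrow>
    (\<forall>I. ideal I (skew_poly_ring \<sigma> n) \<and> I \<noteq> carrier (skew_poly_ring \<sigma> n) \<longrightarrow>
       normalizable_over central (skew_poly_ring \<sigma> n Quot I)
         (\<lambda>d. I +>\<^bsub>skew_poly_ring \<sigma> n\<^esub> const_poly d))"

abbreviation tuple_aut_normalizable where
  "tuple_aut_normalizable \<equiv> tuple_normalizable False"

abbreviation tuple_central_normalizable where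
  "tuple_central_normalizable \<equiv> tuple_normalizable True"

end

theory Submission
  imports Defs
begin

text \<open>
  Modulo a proper ideal of the skew polynomial ring, the images \<open>z i\<close> of the powers
  \<open>t i ^ d i\<close> commute with each other and are automorphic with respect to the common power
  \<open>\<theta> = \<sigma> i ^^ d i\<close>, and the quotient is spanned over \<open>D[z]\<close> by the images of the finitely
  many monomials \<open>t ^ r\<close> with \<open>r i < d i\<close>. So it suffices to normalize \<open>D[z]\<close>, by a skew
  version of Noether normalization. If \<open>z 0, \<dots>, z k\<close> satisfy a nontrivial relation
  \<open>\<Sum> c \<alpha> z ^ \<alpha> = 0\<close>, replace \<open>z i\<close> by \<open>z' i = z i - l i z k\<close> for \<open>i < k\<close>, with all \<open>l i\<close>
  taken from the set \<open>F\<close> of central \<open>\<sigma>\<close>-fixed elements. Modulo lower powers of \<open>z k\<close> with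
  coefficients in \<open>D[z']\<close>, each \<open>z ^ \<alpha>\<close> is \<open>l ^ \<alpha> (z k) ^ |\<alpha>|\<close>, so the relation exhibits
  \<open>u (z k) ^ N\<close> as a combination of lower powers, where \<open>N\<close> is the top degree of the relation
  and \<open>u\<close> is the sum of \<open>c \<alpha> l ^ \<alpha>\<close> over \<open>|\<alpha>| = N\<close>. As \<open>F\<close> is infinite and central, \<open>l\<close>
  can be chosen with \<open>u \<noteq> 0\<close>; then \<open>D[z]\<close> is finite over \<open>D[z']\<close>, and induction on \<open>k\<close> ends
  with algebraically independent elements. These are still \<open>\<theta>\<close>-automorphic, and \<open>\<theta> = id\<close>
  when all \<open>\<sigma> i\<close> have finite order.
\<close>

section \<open>Polynomials evaluated at central elements\<close>

definition eval_poly :: "nat \<Rightarrow> (nat \<Rightarrow> 'a::ring_1) \<Rightarrow> 'a \<Rightarrow> 'a" where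
  "eval_poly e a x = (\<Sum>j\<le>e. a j * x ^ j)"

lemma eval_poly_0 [simp]: "eval_poly 0 a x = a 0"
  by (simp add: eval_poly_def)

lemma eval_poly_Suc: "eval_poly (Suc e) a x = a 0 + eval_poly e (\<lambda>j. a (Suc j)) x * x"
  unfolding eval_poly_def sum.atMost_Suc_shift sum_distrib_right
  by (simp add: power_Suc2 mult.assoc del: power_Suc)

lemma eval_poly_Suc_top_zero: "a (Suc e) = 0 \<Longrightarrow> eval_poly (Suc e) a x = eval_poly e a x"
  by (simp add: eval_poly_def)

lemma synthetic_division:
  fixes a :: "nat \<Rightarrow> 'a::ring_1"
  shows "\<exists>b. b e = a (Suc e) \<and>
    (\<forall>x. x * \<mu> = \<mu> * x \<longrightarrow> eval_poly (Suc e) a x - eval_poly (Suc e) a \<mu> = eval_poly e b x * (x - \<mu>))"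
proof (induction e arbitrary: a)
  case 0
  show ?case
    by (rule exI[of _ "\<lambda>_. a 1"]) (simp add: eval_poly_Suc algebra_simps)
next
  case (Suc e)
  let ?P = "eval_poly (Suc e) (\<lambda>j. a (Suc j))"
  obtain b where b_top: "b e = a (Suc (Suc e))"
    and b_div: "\<And>x. x * \<mu> = \<mu> * x \<Longrightarrow> ?P x - ?P \<mu> = eval_poly e b x * (x - \<mu>)"
    using Suc.IH[of "\<lambda>j. a (Suc j)"] by blast
  show ?case
  proof (intro exI[of _ "case_nat (?P \<mu>) b"] conjI allI impI)
    fix x :: 'a assume comm: "x * \<mu> = \<mu> * x"
    have "eval_poly (Suc (Suc e)) a x - eval_poly (Suc (Suc e)) a \<mu> = ?P x * x - ?P \<mu> * \<mu>"
      by (simp add: eval_poly_Suc)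
    also have "\<dots> = (?P x - ?P \<mu>) * x + ?P \<mu> * (x - \<mu>)"
      by (simp add: algebra_simps)
    also have "\<dots> = eval_poly e b x * ((x - \<mu>) * x) + ?P \<mu> * (x - \<mu>)"
      using b_div[OF comm] by (simp add: mult.assoc)
    also have "(x - \<mu>) * x = x * (x - \<mu>)"
      using comm by (simp add: algebra_simps)
    also have "eval_poly e b x * (x * (x - \<mu>)) + ?P \<mu> * (x - \<mu>) = (?P \<mu> + eval_poly e b x * x) * (x - \<mu>)"
      by (simp add: algebra_simps)
    also have "?P \<mu> + eval_poly e b x * x = eval_poly (Suc e) (case_nat (?P \<mu>) b) x"
      by (simp add: eval_poly_Suc)
    finally show "eval_poly (Suc (Suc e)) a x - eval_poly (Suc (Suc e)) a \<mu>
        = eval_poly (Suc e) (case_nat (?P \<mu>) b) x * (x - \<mu>)" .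
  qed (simp add: b_top)
qed

lemma central_poly_vanishing_imp_zero:
  fixes a :: "nat \<Rightarrow> 'a::division_ring"
  assumes "infinite F" and "\<forall>x\<in>F. \<forall>y. x * y = y * x" and "\<forall>x\<in>F. eval_poly e a x = 0"
  shows "\<forall>j\<le>e. a j = 0"
  using assms
proof (induction e arbitrary: a F)
  case 0
  then obtain x where "x \<in> F" by (metis ex_in_conv finite.emptyI)
  then show ?case using "0.prems"(3) by force
next
  case (Suc e)
  obtain \<mu> where \<mu>: "\<mu> \<in> F" using Suc.prems(1) by (metis ex_in_conv finite.emptyI)
  obtain b where b_top: "b e = a (Suc e)"
    and b_div: "\<forall>x. x * \<mu> = \<mu> * x \<longrightarrow> eval_poly (Suc e) a x - eval_poly (Suc e) a \<mu> = eval_poly e b x * (x - \<mu>)"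
    using synthetic_division by blast
  have "\<forall>x\<in>F - {\<mu>}. eval_poly e b x = 0"
  proof
    fix x assume x: "x \<in> F - {\<mu>}"
    have "eval_poly e b x * (x - \<mu>) = 0"
      using b_div Suc.prems(2,3) \<mu> x by (metis DiffD1 diff_self)
    then show "eval_poly e b x = 0" using x by simp
  qed
  then have "\<forall>j\<le>e. b j = 0"
    using Suc.IH[of "F - {\<mu>}" b] Suc.prems(1,2) by auto
  then have top: "a (Suc e) = 0" using b_top by simp
  then have "\<forall>j\<le>e. a j = 0"
    using Suc.IH[of F a] Suc.prems by (simp add: eval_poly_Suc_top_zero)
  with top show ?case by (simp add: le_Suc_eq)
qed

lemma central_poly_nonroot:
  fixes a :: "nat \<Rightarrow> 'a::division_ring"
  assumes "infinite F" and "\<forall>x\<in>F. \<forall>y. x * y = y * x"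
    and "finite J" and "j \<in> J" and "a j \<noteq> 0"
  shows "\<exists>\<mu>\<in>F. (\<Sum>i\<in>J. a i * \<mu> ^ i) \<noteq> 0"
proof (rule ccontr)
  assume all_roots: "\<not> ?thesis"
  define a' where "a' i = (if i \<in> J then a i else 0)" for i
  have "(\<Sum>i\<in>J. a i * \<mu> ^ i) = eval_poly (Max J) a' \<mu>" for \<mu>
    unfolding eval_poly_def
    by (rule sum.mono_neutral_cong_left) (use assms(3) in \<open>auto simp: a'_def\<close>)
  then have "\<forall>i\<le>Max J. a' i = 0"
    using all_roots central_poly_vanishing_imp_zero[OF assms(1,2)] by simp
  moreover have "j \<le> Max J" using assms(3,4) by simp
  ultimately show False using assms(4,5) by (auto simp: a'_def)
qed

fun monom_val :: "(nat \<Rightarrow> 'a::ring_1) \<Rightarrow> nat \<Rightarrow> (nat \<Rightarrow> nat) \<Rightarrow> 'a" where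
  "monom_val l 0 \<alpha> = 1"
| "monom_val l (Suc k) \<alpha> = monom_val l k \<alpha> * l k ^ \<alpha> k"

lemma monom_val_cong: "(\<And>i. i < k \<Longrightarrow> l i = l' i) \<Longrightarrow> monom_val l k \<alpha> = monom_val l' k \<alpha>"
  by (induction k) auto

lemma central_multipoly_nonroot:
  fixes c :: "(nat \<Rightarrow> nat) \<Rightarrow> 'a::division_ring"
  assumes F: "infinite F" "\<forall>x\<in>F. \<forall>y. x * y = y * x"
  shows "finite B \<Longrightarrow> B \<noteq> {} \<Longrightarrow> \<forall>\<alpha>\<in>B. c \<alpha> \<noteq> 0 \<Longrightarrow>
     \<forall>\<alpha>\<in>B. \<forall>\<beta>\<in>B. (\<forall>i<k. \<alpha> i = \<beta> i) \<longrightarrow> \<alpha> = \<beta> \<Longrightarrow>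
     \<exists>l. (\<forall>i<k. l i \<in> F) \<and> (\<Sum>\<alpha>\<in>B. c \<alpha> * monom_val l k \<alpha>) \<noteq> 0"
proof (induction k arbitrary: B)
  case 0
  then obtain \<alpha> where "B = {\<alpha>}" by blast
  then show ?case using "0.prems"(3) by simp
next
  case (Suc k)
  obtain \<alpha>0 where \<alpha>0: "\<alpha>0 \<in> B" using Suc.prems(2) by blast
  \<comment> \<open>Freeze the last variable at the exponent of \<open>\<alpha>0\<close>, find a nonroot for the first \<open>k\<close>
    variables, and then one for the last variable of the resulting univariate polynomial.\<close>
  define B0 where "B0 = {\<alpha> \<in> B. \<alpha> k = \<alpha>0 k}"
  have "\<forall>\<alpha>\<in>B0. \<forall>\<beta>\<in>B0. (\<forall>i<k. \<alpha> i = \<beta> i) \<longrightarrow> \<alpha> = \<beta>"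
    using Suc.prems(4) by (auto simp: B0_def less_Suc_eq)
  moreover have "finite B0" "B0 \<noteq> {}" "\<forall>\<alpha>\<in>B0. c \<alpha> \<noteq> 0"
    using Suc.prems \<alpha>0 by (auto simp: B0_def)
  ultimately obtain l0 where l0: "\<forall>i<k. l0 i \<in> F" "(\<Sum>\<alpha>\<in>B0. c \<alpha> * monom_val l0 k \<alpha>) \<noteq> 0"
    using Suc.IH by blast
  define a where "a j = (\<Sum>\<alpha>\<in>{\<alpha> \<in> B. \<alpha> k = j}. c \<alpha> * monom_val l0 k \<alpha>)" for j
  have "a (\<alpha>0 k) \<noteq> 0" using l0(2) by (simp add: a_def B0_def)
  then obtain \<mu> where \<mu>: "\<mu> \<in> F" "(\<Sum>j\<in>(\<lambda>\<alpha>. \<alpha> k) ` B. a j * \<mu> ^ j) \<noteq> 0"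
    using central_poly_nonroot[OF F, of "(\<lambda>\<alpha>. \<alpha> k) ` B" "\<alpha>0 k" a] Suc.prems(1) \<alpha>0 by blast
  define l where "l = l0(k := \<mu>)"
  have "(\<Sum>\<alpha>\<in>B. c \<alpha> * monom_val l (Suc k) \<alpha>) = (\<Sum>\<alpha>\<in>B. c \<alpha> * monom_val l0 k \<alpha> * \<mu> ^ \<alpha> k)"
    using monom_val_cong[of k l l0] by (simp add: l_def mult.assoc)
  also have "\<dots> = (\<Sum>j\<in>(\<lambda>\<alpha>. \<alpha> k) ` B. \<Sum>\<alpha>\<in>{\<alpha> \<in> B. \<alpha> k = j}. c \<alpha> * monom_val l0 k \<alpha> * \<mu> ^ \<alpha> k)"
    by (rule sum.group[symmetric]) (use Suc.prems(1) in auto)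
  also have "\<dots> = (\<Sum>j\<in>(\<lambda>\<alpha>. \<alpha> k) ` B. a j * \<mu> ^ j)"
    unfolding a_def sum_distrib_right by (rule sum.cong) auto
  finally have "(\<Sum>\<alpha>\<in>B. c \<alpha> * monom_val l (Suc k) \<alpha>) \<noteq> 0" using \<mu> by simp
  moreover have "\<forall>i<Suc k. l i \<in> F" using l0(1) \<mu>(1) by (simp add: l_def less_Suc_eq)
  ultimately show ?case by blast
qed

section \<open>Left spans\<close>

inductive_set lspan :: "('b, 'c) ring_scheme \<Rightarrow> 'b set \<Rightarrow> 'b set \<Rightarrow> 'b set" for S A K where
  lspan_zero: "\<zero>\<^bsub>S\<^esub> \<in> lspan S A K"
| lspan_gen: "a \<in> A \<Longrightarrow> x \<in> K \<Longrightarrow> a \<otimes>\<^bsub>S\<^esub> x \<in> lspan S A K"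
| lspan_add: "u \<in> lspan S A K \<Longrightarrow> v \<in> lspan S A K \<Longrightarrow> u \<oplus>\<^bsub>S\<^esub> v \<in> lspan S A K"

context ring
begin

lemma l_diff_distr: "a \<in> carrier R \<Longrightarrow> b \<in> carrier R \<Longrightarrow> c \<in> carrier R \<Longrightarrow> (a \<ominus> b) \<otimes> c = a \<otimes> c \<ominus> b \<otimes> c"
  by (simp add: minus_eq l_distr l_minus)

lemma r_diff_distr: "a \<in> carrier R \<Longrightarrow> b \<in> carrier R \<Longrightarrow> c \<in> carrier R \<Longrightarrow> c \<otimes> (a \<ominus> b) = c \<otimes> a \<ominus> c \<otimes> b"
  by (simp add: minus_eq r_distr r_minus)

lemma lspan_carrier:
  assumes "A \<subseteq> carrier R" "K \<subseteq> carrier R"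
  shows "u \<in> lspan R A K \<Longrightarrow> u \<in> carrier R"
  by (induction rule: lspan.induct) (use assms in auto)

lemma lspan_mono:
  assumes "K \<subseteq> K'"
  shows "u \<in> lspan R A K \<Longrightarrow> u \<in> lspan R A K'"
  by (induction rule: lspan.induct) (use assms in \<open>auto intro: lspan.intros\<close>)

lemma lspan_lmult:
  assumes A: "subring A R" and K: "K \<subseteq> carrier R" and b: "b \<in> A"
  shows "u \<in> lspan R A K \<Longrightarrow> b \<otimes> u \<in> lspan R A K"
proof (induction rule: lspan.induct)
  have b_carr: "b \<in> carrier R" using subringE(1)[OF A] b by blast
  { case lspan_zero
    show ?case using b_carr by (simp add: lspan.lspan_zero) }
  { case (lspan_gen a x)
    then have "b \<otimes> (a \<otimes> x) = (b \<otimes> a) \<otimes> x"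
      using b_carr subringE(1)[OF A] K by (simp add: m_assoc subset_eq)
    then show ?case using lspan_gen subringE(6)[OF A b] by (simp add: lspan.lspan_gen) }
  { case (lspan_add u v)
    then have "b \<otimes> (u \<oplus> v) = b \<otimes> u \<oplus> b \<otimes> v"
      using b_carr lspan_carrier[OF subringE(1)[OF A] K] by (simp add: r_distr)
    then show ?case using lspan_add by (simp add: lspan.lspan_add) }
qed

lemma lspan_uminus:
  assumes A: "subring A R" and K: "K \<subseteq> carrier R" and u: "u \<in> lspan R A K"
  shows "\<ominus> u \<in> lspan R A K"
proof -
  have "\<ominus> \<one> \<otimes> u \<in> lspan R A K"
    by (rule lspan_lmult[OF A K _ u]) (simp add: subringE(3,5)[OF A])
  then show ?thesis using lspan_carrier[OF subringE(1)[OF A] K u] by (simp add: l_minus)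
qed

lemma lspan_rmult:
  assumes A: "A \<subseteq> carrier R" and K: "K \<subseteq> carrier R" and c: "c \<in> carrier R"
    and gen: "\<And>a x. a \<in> A \<Longrightarrow> x \<in> K \<Longrightarrow> (a \<otimes> x) \<otimes> c \<in> lspan R A' K'"
  shows "u \<in> lspan R A K \<Longrightarrow> u \<otimes> c \<in> lspan R A' K'"
proof (induction rule: lspan.induct)
  case (lspan_add u v)
  then have "(u \<oplus> v) \<otimes> c = u \<otimes> c \<oplus> v \<otimes> c"
    using c lspan_carrier[OF A K] by (simp add: l_distr)
  then show ?case using lspan_add by (simp add: lspan.lspan_add)
qed (use c gen in \<open>simp_all add: lspan.lspan_zero\<close>)

lemma lspan_trans:
  assumes A: "subring A R" and H: "H \<subseteq> carrier R" and K: "K \<subseteq> carrier R"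
    and B: "B \<subseteq> lspan R A H"
  shows "u \<in> lspan R B K \<Longrightarrow> u \<in> lspan R A {h \<otimes> x |h x. h \<in> H \<and> x \<in> K}"
proof (induction rule: lspan.induct)
  case (lspan_gen b x)
  have A_carr: "A \<subseteq> carrier R" using subringE(1)[OF A] .
  show ?case
  proof (rule lspan_rmult[OF A_carr H])
    show "b \<in> lspan R A H" using B lspan_gen(1) by blast
    show "x \<in> carrier R" using lspan_gen(2) K by blast
    fix a h assume "a \<in> A" "h \<in> H"
    then have "(a \<otimes> h) \<otimes> x = a \<otimes> (h \<otimes> x)"
      using A_carr H K lspan_gen(2) by (simp add: m_assoc subset_eq)
    then show "(a \<otimes> h) \<otimes> x \<in> lspan R A {h \<otimes> x |h x. h \<in> H \<and> x \<in> K}"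
      using \<open>a \<in> A\<close> \<open>h \<in> H\<close> lspan_gen(2) by (auto intro: lspan.lspan_gen)
  qed
qed (auto intro: lspan.intros)

lemma lspan_imp_finsum:
  assumes A: "subring A R" and G: "finite G" "G \<subseteq> carrier R"
  shows "u \<in> lspan R A G \<Longrightarrow> \<exists>r. r \<in> G \<rightarrow> A \<and> u = finsum R (\<lambda>g. r g \<otimes> g) G"
proof (induction rule: lspan.induct)
  have A_carr: "A \<subseteq> carrier R" using subringE(1)[OF A] .
  { case lspan_zero
    have "finsum R (\<lambda>g. \<zero> \<otimes> g) G = finsum R (\<lambda>g. \<zero>) G"
      by (rule finsum_cong') (use G in auto)
    then show ?case
      by (intro exI[of _ "\<lambda>_. \<zero>"]) (use subringE(2)[OF A] in simp) }
  { case (lspan_gen a x)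
    define r where "r g = (if g = x then a else \<zero>)" for g
    have "finsum R (\<lambda>g. r g \<otimes> g) G = finsum R (\<lambda>g. r g \<otimes> g) (insert x (G - {x}))"
      using lspan_gen by (simp add: insert_absorb)
    also have "\<dots> = a \<otimes> x \<oplus> finsum R (\<lambda>g. r g \<otimes> g) (G - {x})"
      by (subst finsum_insert) (use G lspan_gen A_carr in \<open>auto simp: r_def\<close>)
    also have "finsum R (\<lambda>g. r g \<otimes> g) (G - {x}) = finsum R (\<lambda>g. \<zero>) (G - {x})"
      by (rule finsum_cong') (use G in \<open>auto simp: r_def\<close>)
    finally have "a \<otimes> x = finsum R (\<lambda>g. r g \<otimes> g) G"
      using lspan_gen G A_carr by (simp add: subset_eq)
    moreover have "r \<in> G \<rightarrow> A" using lspan_gen subringE(2)[OF A] by (auto simp: r_def)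
    ultimately show ?case by blast }
  { case (lspan_add u v)
    then obtain r1 r2 where r: "r1 \<in> G \<rightarrow> A" "u = finsum R (\<lambda>g. r1 g \<otimes> g) G"
       "r2 \<in> G \<rightarrow> A" "v = finsum R (\<lambda>g. r2 g \<otimes> g) G" by blast
    have r_carr: "\<And>g. g \<in> G \<Longrightarrow> r1 g \<in> carrier R \<and> r2 g \<in> carrier R" using r A_carr by blast
    have "finsum R (\<lambda>g. (r1 g \<oplus> r2 g) \<otimes> g) G = finsum R (\<lambda>g. r1 g \<otimes> g \<oplus> r2 g \<otimes> g) G"
      by (rule finsum_cong') (use r_carr G in \<open>auto simp: l_distr\<close>)
    also have "\<dots> = u \<oplus> v" unfolding r
      by (rule finsum_addf) (use r_carr G in auto)
    finally have "u \<oplus> v = finsum R (\<lambda>g. (r1 g \<oplus> r2 g) \<otimes> g) G" by simp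
    moreover have "(\<lambda>g. r1 g \<oplus> r2 g) \<in> G \<rightarrow> A" using r subringE(7)[OF A] by auto
    ultimately show ?case by blast }
qed

lemma subring_nat_pow_closed: "subring A R \<Longrightarrow> x \<in> A \<Longrightarrow> x [^] (j::nat) \<in> A"
  by (induction j) (auto intro: subringE(3,6))

lemma generate_ring_subset_if_rmult_closed:
  assumes gens: "gens \<subseteq> carrier R" and M: "M \<subseteq> carrier R" and one: "\<one> \<in> M"
    and add: "\<And>x y. x \<in> M \<Longrightarrow> y \<in> M \<Longrightarrow> x \<oplus> y \<in> M"
    and uminus: "\<And>x. x \<in> M \<Longrightarrow> \<ominus> x \<in> M"
    and mult: "\<And>x g. x \<in> M \<Longrightarrow> g \<in> gens \<Longrightarrow> x \<otimes> g \<in> M"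
  shows "generate_ring R gens \<subseteq> M"
proof -
  \<comment> \<open>The right multipliers of \<open>M\<close> form a subring containing the generators.\<close>
  define T where "T = {y \<in> carrier R. \<forall>x\<in>M. x \<otimes> y \<in> M}"
  have "y \<in> T" if "y \<in> generate_ring R gens" for y
    using that
  proof (induction rule: generate_ring.induct)
    case one then show ?case using M by (auto simp: T_def)
  next
    case (incl h) then show ?case using gens mult by (auto simp: T_def)
  next
    case (a_inv h) then show ?case using M uminus by (auto simp: T_def r_minus)
  next
    case (eng_add h1 h2) then show ?case using M add by (auto simp: T_def r_distr)
  next
    case (eng_mult h1 h2) then show ?case using M by (auto simp: T_def simp flip: m_assoc)
  qed
  then show ?thesis using one by (force simp: T_def)
qed

end

section \<open>Skew Noether normalization\<close>

locale noether_setting = ring S for S :: "('b, 'c) ring_scheme" (structure) +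
  fixes \<iota> :: "'a::division_ring \<Rightarrow> 'b" and \<theta> :: "'a \<Rightarrow> 'a" and F :: "'a set"
  assumes \<iota>_carrier [simp]: "\<iota> x \<in> carrier S"
    and \<iota>_add: "\<iota> (x + y) = \<iota> x \<oplus> \<iota> y"
    and \<iota>_mult: "\<iota> (x * y) = \<iota> x \<otimes> \<iota> y"
    and \<iota>_one: "\<iota> 1 = \<one>"
    and one_neq_zero: "\<one> \<noteq> \<zero>"
    and \<theta>_one: "\<theta> 1 = 1"
    and F_infinite: "infinite F"
    and F_central: "\<forall>x\<in>F. \<forall>y. x * y = y * x"
    and F_fixed: "\<forall>x\<in>F. \<theta> x = x"
begin

lemma \<iota>_zero [simp]: "\<iota> 0 = \<zero>"
  using \<iota>_add[of 0 0] by simp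

lemma \<iota>_eq_zero_iff [simp]: "\<iota> x = \<zero> \<longleftrightarrow> x = 0"
proof
  assume "\<iota> x = \<zero>"
  show "x = 0"
  proof (rule ccontr)
    assume "x \<noteq> 0"
    then have "\<one> = \<iota> (inverse x) \<otimes> \<iota> x" by (simp flip: \<iota>_mult \<iota>_one)
    with \<open>\<iota> x = \<zero>\<close> one_neq_zero show False by simp
  qed
qed simp

definition adjoin :: "(nat \<Rightarrow> 'b) \<Rightarrow> nat \<Rightarrow> 'b set" where
  "adjoin z k = generate_ring S (range \<iota> \<union> z ` {..<k})"

definition theta_family :: "(nat \<Rightarrow> 'b) \<Rightarrow> nat \<Rightarrow> bool" where
  "theta_family z k \<longleftrightarrow> (\<forall>i<k. z i \<in> carrier S) \<and> (\<forall>i<k. \<forall>j<k. z i \<otimes> z j = z j \<otimes> z i)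
     \<and> (\<forall>i<k. \<forall>b. z i \<otimes> \<iota> b = \<iota> (\<theta> b) \<otimes> z i)"

definition alg_indep :: "(nat \<Rightarrow> 'b) \<Rightarrow> nat \<Rightarrow> bool" where
  "alg_indep z k \<longleftrightarrow> (\<forall>c :: (nat \<Rightarrow> nat) \<Rightarrow> 'a.
      finite {\<alpha>. c \<alpha> \<noteq> 0} \<and> (\<forall>\<alpha>. c \<alpha> \<noteq> 0 \<longrightarrow> \<alpha> \<in> expvecs k)
      \<and> finsum S (\<lambda>\<alpha>. \<iota> (c \<alpha>) \<otimes> smonom S z k \<alpha>) {\<alpha>. c \<alpha> \<noteq> 0} = \<zero>
      \<longrightarrow> (\<forall>\<alpha>. c \<alpha> = 0))"

lemma adjoin_subring: "theta_family z k \<Longrightarrow> subring (adjoin z k) S"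
  unfolding adjoin_def theta_family_def by (rule generate_ring_is_subring) auto

lemma adjoin_carrier: "theta_family z k \<Longrightarrow> adjoin z k \<subseteq> carrier S"
  using adjoin_subring subringE(1) by blast

lemma \<iota>_in_adjoin: "\<iota> b \<in> adjoin z k"
  unfolding adjoin_def by (rule generate_ring.incl) auto

lemma in_adjoin: "i < k \<Longrightarrow> z i \<in> adjoin z k"
  unfolding adjoin_def by (rule generate_ring.incl) auto

lemma alg_indep_0: "alg_indep z 0"
  unfolding alg_indep_def
proof (intro allI impI)
  fix c :: "(nat \<Rightarrow> nat) \<Rightarrow> 'a" and \<alpha>
  assume c: "finite {\<alpha>. c \<alpha> \<noteq> 0} \<and> (\<forall>\<alpha>. c \<alpha> \<noteq> 0 \<longrightarrow> \<alpha> \<in> expvecs 0)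
          \<and> finsum S (\<lambda>\<alpha>. \<iota> (c \<alpha>) \<otimes> smonom S z 0 \<alpha>) {\<alpha>. c \<alpha> \<noteq> 0} = \<zero>"
  have supp: "{\<alpha>. c \<alpha> \<noteq> 0} \<subseteq> {\<lambda>_. 0}"
    using c by (auto simp: expvecs_def)
  show "c \<alpha> = 0"
  proof (cases "c (\<lambda>_. 0) = 0")
    case True
    then show ?thesis using supp by auto
  next
    case False
    then have "{\<alpha>. c \<alpha> \<noteq> 0} = {\<lambda>_. 0}" using supp by auto
    then show ?thesis using c False by (simp add: finsum_insert)
  qed
qed

definition commutes :: "'b \<Rightarrow> 'b \<Rightarrow> bool" where
  "commutes x y \<longleftrightarrow> x \<otimes> y = y \<otimes> x"

lemma commutes_sym: "commutes x y \<Longrightarrow> commutes y x"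
  by (simp add: commutes_def)

lemma commutes_diff:
  "\<lbrakk>x \<in> carrier S; a \<in> carrier S; b \<in> carrier S; commutes x a; commutes x b\<rbrakk> \<Longrightarrow> commutes x (a \<ominus> b)"
  by (simp add: commutes_def l_diff_distr r_diff_distr)

lemma commutes_mult:
  "\<lbrakk>x \<in> carrier S; a \<in> carrier S; b \<in> carrier S; commutes x a; commutes x b\<rbrakk> \<Longrightarrow> commutes x (a \<otimes> b)"
  unfolding commutes_def by (metis m_assoc)

lemma commutes_pow:
  "\<lbrakk>x \<in> carrier S; a \<in> carrier S; commutes x a\<rbrakk> \<Longrightarrow> commutes x (a [^] (j::nat))"
  by (induction j) (auto simp: commutes_def intro: commutes_mult[unfolded commutes_def])

end

locale noether_step = noether_setting +
  fixes z and k :: nat and l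
  assumes family: "theta_family z (Suc k)" and l_in_F: "\<forall>i<k. l i \<in> F"
begin

text \<open>Setting \<open>l_ext k = 1\<close> and \<open>z_red k = \<zero>\<close> makes \<open>z_eq_z_red_plus\<close> hold for \<open>z k = w\<close> too.\<close>

definition "w = z k"
definition "l_ext i = (if i < k then l i else 1)"
definition "z_red i = (if i < k then z i \<ominus> \<iota> (l i) \<otimes> w else \<zero>)"
definition "D_red = adjoin z_red k"
definition V where
  "V p = lspan S D_red ((\<lambda>j. w [^] (j::nat)) ` {..<p})"
definition has_lead where
  "has_lead X a (p::nat) \<longleftrightarrow> X \<in> carrier S \<and> X \<ominus> \<iota> a \<otimes> w [^] p \<in> V p"

lemma z_carrier: "i < Suc k \<Longrightarrow> z i \<in> carrier S"
  using family by (simp add: theta_family_def)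

lemma w_carrier [simp]: "w \<in> carrier S"
  using z_carrier by (simp add: w_def)

lemma z_comm: "i < Suc k \<Longrightarrow> j < Suc k \<Longrightarrow> z i \<otimes> z j = z j \<otimes> z i"
  using family by (simp add: theta_family_def)

lemma z_\<iota>: "i < Suc k \<Longrightarrow> z i \<otimes> \<iota> b = \<iota> (\<theta> b) \<otimes> z i"
  using family by (simp add: theta_family_def)

lemma w_\<iota>: "w \<otimes> \<iota> b = \<iota> (\<theta> b) \<otimes> w"
  using z_\<iota>[of k] by (simp add: w_def)

lemma z_red_carrier [simp]: "z_red i \<in> carrier S"
  using z_carrier by (simp add: z_red_def)

lemma l_ext_fixed: "\<theta> (l_ext i) = l_ext i"
  using l_in_F F_fixed \<theta>_one by (simp add: l_ext_def)

lemma l_ext_central: "l_ext i * y = y * l_ext i"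
  using l_in_F F_central by (simp add: l_ext_def)

lemma z_eq_z_red_plus:
  assumes "i < Suc k"
  shows "z i = z_red i \<oplus> \<iota> (l_ext i) \<otimes> w"
proof (cases "i < k")
  case True
  then have "z i \<in> carrier S" "\<iota> (l i) \<otimes> w \<in> carrier S" using z_carrier by auto
  then show ?thesis using True by (simp add: z_red_def l_ext_def minus_eq a_assoc l_neg)
next
  case False
  then have "i = k" using assms by simp
  then show ?thesis by (simp add: z_red_def l_ext_def \<iota>_one w_def z_carrier)
qed

lemma commutes_z_l_ext: "i < Suc k \<Longrightarrow> commutes (z i) (\<iota> (l_ext j))"
  by (simp add: commutes_def z_\<iota> l_ext_fixed)

lemma commutes_l_ext_l_ext: "commutes (\<iota> (l_ext i)) (\<iota> (l_ext j))"
  using l_ext_central[of i "l_ext j"] by (simp add: commutes_def flip: \<iota>_mult)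

lemma commutes_z_z_red: "j < Suc k \<Longrightarrow> commutes (z j) (z_red i)"
proof (cases "i < k")
  case True
  assume j: "j < Suc k"
  have "commutes (z j) (\<iota> (l i) \<otimes> w)"
    using j True z_carrier z_comm commutes_z_l_ext[of j i]
    by (intro commutes_mult) (auto simp: commutes_def w_def l_ext_def)
  then show ?thesis
    using True j z_carrier z_comm by (auto simp: z_red_def commutes_def intro!: commutes_diff[unfolded commutes_def])
next
  case False
  assume "j < Suc k"
  then show ?thesis using False z_carrier[of j] by (simp add: z_red_def commutes_def)
qed

lemma commutes_l_ext_z_red: "commutes (\<iota> (l_ext j)) (z_red i)"
proof (cases "i < k")
  case True
  have "commutes (\<iota> (l_ext j)) (z i)" "commutes (\<iota> (l_ext j)) w" "commutes (\<iota> (l_ext j)) (\<iota> (l i))"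
    using True commutes_z_l_ext commutes_sym commutes_l_ext_l_ext[of j i]
    by (auto simp: w_def l_ext_def)
  then show ?thesis
    using True z_carrier by (auto simp: z_red_def intro!: commutes_diff commutes_mult)
qed (simp add: z_red_def commutes_def)

lemma commutes_z_red_z_red: "commutes (z_red j) (z_red i)"
proof (cases "j < k")
  case True
  have "commutes (z_red i) (z j)" "commutes (z_red i) w" "commutes (z_red i) (\<iota> (l j))"
    using True commutes_z_z_red commutes_l_ext_z_red[of j i] commutes_sym
    by (auto simp: w_def l_ext_def)
  then have "commutes (z_red i) (z_red j)"
    using True z_carrier by (auto simp: z_red_def intro!: commutes_diff commutes_mult)
  then show ?thesis by (rule commutes_sym)
qed (use z_red_carrier[of i] in \<open>simp add: z_red_def commutes_def\<close>)

lemma commutes_z_red_w: "commutes (z_red i) w"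
  using commutes_z_z_red[of k i] commutes_sym by (simp add: w_def)

lemma commutes_l_ext_w: "commutes (\<iota> (l_ext i)) w"
  using commutes_z_l_ext[of k i] commutes_sym by (simp add: w_def)

lemma z_red_\<iota>: "z_red i \<otimes> \<iota> b = \<iota> (\<theta> b) \<otimes> z_red i"
proof (cases "i < k")
  case True
  have l_comm: "\<iota> (l i) \<otimes> \<iota> (\<theta> b) = \<iota> (\<theta> b) \<otimes> \<iota> (l i)"
    using l_ext_central[of i "\<theta> b"] True by (simp add: l_ext_def flip: \<iota>_mult)
  have zi: "z i \<in> carrier S" using True z_carrier by simp
  have "z_red i \<otimes> \<iota> b = z i \<otimes> \<iota> b \<ominus> \<iota> (l i) \<otimes> (w \<otimes> \<iota> b)"
    using True zi by (simp add: z_red_def l_diff_distr m_assoc)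
  also have "\<dots> = \<iota> (\<theta> b) \<otimes> z i \<ominus> (\<iota> (l i) \<otimes> \<iota> (\<theta> b)) \<otimes> w"
    using True zi z_\<iota> w_\<iota> by (simp add: m_assoc)
  also have "\<dots> = \<iota> (\<theta> b) \<otimes> z_red i"
    using True zi l_comm by (simp add: z_red_def r_diff_distr m_assoc)
  finally show ?thesis .
qed (simp add: z_red_def)

lemma theta_family_z_red: "theta_family z_red k"
  unfolding theta_family_def using commutes_z_red_z_red z_red_\<iota> by (auto simp: commutes_def)

lemma D_red_subring: "subring D_red S"
  unfolding D_red_def by (rule adjoin_subring[OF theta_family_z_red])

lemma D_red_carrier: "D_red \<subseteq> carrier S"
  using D_red_subring subringE(1) by blast

lemma \<iota>_in_D_red: "\<iota> b \<in> D_red"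
  unfolding D_red_def by (rule \<iota>_in_adjoin)

lemma z_red_in_D_red: "z_red i \<in> D_red"
  using subringE(2)[OF D_red_subring] in_adjoin[of i k z_red]
  by (cases "i < k") (auto simp: D_red_def z_red_def)

lemma D_red_mult: "a \<in> D_red \<Longrightarrow> b \<in> D_red \<Longrightarrow> a \<otimes> b \<in> D_red"
  using subringE(6)[OF D_red_subring] by blast

lemma w_pow_\<iota>: "w [^] (j::nat) \<otimes> \<iota> b = \<iota> ((\<theta> ^^ j) b) \<otimes> w [^] j"
proof (induction j arbitrary: b)
  case (Suc j)
  have "w [^] Suc j \<otimes> \<iota> b = w [^] j \<otimes> (w \<otimes> \<iota> b)" by (simp add: m_assoc)
  also have "\<dots> = (w [^] j \<otimes> \<iota> (\<theta> b)) \<otimes> w" by (simp add: w_\<iota> m_assoc)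
  also have "\<dots> = \<iota> ((\<theta> ^^ j) (\<theta> b)) \<otimes> w [^] Suc j" by (simp add: Suc m_assoc)
  finally show ?case by (simp add: funpow_swap1)
qed simp

lemma w_pows_carrier: "(\<lambda>j. w [^] (j::nat)) ` {..<p} \<subseteq> carrier S"
  by auto

lemma V_carrier: "x \<in> V p \<Longrightarrow> x \<in> carrier S"
  unfolding V_def using lspan_carrier[OF D_red_carrier w_pows_carrier] by blast

lemma V_lmult: "a \<in> D_red \<Longrightarrow> x \<in> V p \<Longrightarrow> a \<otimes> x \<in> V p"
  unfolding V_def by (rule lspan_lmult[OF D_red_subring w_pows_carrier])

lemma V_mono: "p \<le> q \<Longrightarrow> x \<in> V p \<Longrightarrow> x \<in> V q"
  unfolding V_def by (rule lspan_mono) auto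

lemma V_add: "x \<in> V p \<Longrightarrow> y \<in> V p \<Longrightarrow> x \<oplus> y \<in> V p"
  unfolding V_def by (rule lspan.lspan_add)

lemma V_zero: "\<zero> \<in> V p"
  unfolding V_def by (rule lspan.lspan_zero)

lemma V_uminus: "x \<in> V p \<Longrightarrow> \<ominus> x \<in> V p"
  unfolding V_def by (rule lspan_uminus[OF D_red_subring w_pows_carrier])

lemma V_gen: "a \<in> D_red \<Longrightarrow> j < p \<Longrightarrow> a \<otimes> w [^] (j::nat) \<in> V p"
  unfolding V_def by (rule lspan.lspan_gen) auto

lemma V_rmult:
  assumes c: "c \<in> carrier S"
    and gen: "\<And>a j. a \<in> D_red \<Longrightarrow> j < p \<Longrightarrow> (a \<otimes> w [^] (j::nat)) \<otimes> c \<in> V q"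
  shows "x \<in> V p \<Longrightarrow> x \<otimes> c \<in> V q"
  unfolding V_def
  by (rule lspan_rmult[OF D_red_carrier w_pows_carrier c]) (use gen in \<open>auto simp: V_def\<close>)

lemma V_rmult_commuting: "c \<in> D_red \<Longrightarrow> commutes c w \<Longrightarrow> x \<in> V p \<Longrightarrow> x \<otimes> c \<in> V p"
proof (rule V_rmult)
  fix a j assume c: "c \<in> D_red" "commutes c w" and a: "a \<in> D_red" "j < p"
  have carr: "c \<in> carrier S" "a \<in> carrier S" using c a D_red_carrier by auto
  have "commutes (w [^] j) c" using commutes_pow[OF carr(1) _ c(2)] commutes_sym by simp
  then have "(a \<otimes> w [^] j) \<otimes> c = (a \<otimes> c) \<otimes> w [^] j"
    using carr by (simp add: commutes_def m_assoc)
  then show "(a \<otimes> w [^] j) \<otimes> c \<in> V p" using V_gen[OF D_red_mult[OF a(1) c(1)] a(2)] by simp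
qed (use D_red_carrier in auto)

lemma V_rmult_\<iota>: "x \<in> V p \<Longrightarrow> x \<otimes> \<iota> b \<in> V p"
proof (rule V_rmult)
  fix a j assume a: "a \<in> D_red" "j < p"
  then have "(a \<otimes> w [^] j) \<otimes> \<iota> b = (a \<otimes> \<iota> ((\<theta> ^^ j) b)) \<otimes> w [^] j"
    using D_red_carrier by (auto simp: m_assoc w_pow_\<iota>)
  then show "(a \<otimes> w [^] j) \<otimes> \<iota> b \<in> V p" using V_gen[OF D_red_mult[OF a(1) \<iota>_in_D_red] a(2)] by simp
qed simp

lemma V_rmult_w: "x \<in> V p \<Longrightarrow> x \<otimes> w \<in> V (Suc p)"
proof (rule V_rmult)
  fix a j assume a: "a \<in> D_red" "j < p"
  then have "(a \<otimes> w [^] j) \<otimes> w = a \<otimes> w [^] (Suc j)"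
    using D_red_carrier by (auto simp: m_assoc)
  then show "(a \<otimes> w [^] j) \<otimes> w \<in> V (Suc p)" using V_gen[OF a(1), of "Suc j"] a(2) by simp
qed simp


lemma has_lead_mult_z:
  assumes i: "i < Suc k" and X: "has_lead X a p"
  shows "has_lead (X \<otimes> z i) (a * l_ext i) (Suc p)"
proof -
  define v where "v = X \<ominus> \<iota> a \<otimes> w [^] p"
  define A where "A = \<iota> a"
  define P where "P = w [^] p"
  define Z where "Z = z_red i"
  define L where "L = \<iota> (l_ext i)"
  have v: "v \<in> V p" and X_carr: "X \<in> carrier S" using X by (auto simp: has_lead_def v_def)
  have carr: "A \<in> carrier S" "P \<in> carrier S" "Z \<in> carrier S" "L \<in> carrier S" "v \<in> carrier S"
    using V_carrier[OF v] by (auto simp: A_def P_def Z_def L_def)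
  have X_eq: "X = A \<otimes> P \<oplus> v" using X_carr carr unfolding v_def A_def P_def by algebra
  have z_eq: "z i = Z \<oplus> L \<otimes> w" unfolding Z_def L_def by (rule z_eq_z_red_plus[OF i])
  have "commutes L P" "commutes Z P"
    using commutes_pow[OF _ w_carrier] commutes_l_ext_w commutes_z_red_w by (auto simp: L_def Z_def P_def)
  then have PL: "P \<otimes> L = L \<otimes> P" and PZ: "P \<otimes> Z = Z \<otimes> P" by (simp_all add: commutes_def)
  have lead: "A \<otimes> P \<otimes> (L \<otimes> w) = \<iota> (a * l_ext i) \<otimes> w [^] Suc p"
  proof -
    have "A \<otimes> P \<otimes> (L \<otimes> w) = (A \<otimes> L) \<otimes> (P \<otimes> w)"
      using carr PL by (simp add: m_assoc flip: m_assoc[of P L w])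
    then show ?thesis by (simp add: A_def L_def P_def \<iota>_mult)
  qed
  have "(A \<otimes> P \<oplus> v) \<otimes> (Z \<oplus> L \<otimes> w) \<ominus> A \<otimes> P \<otimes> (L \<otimes> w)
      = A \<otimes> (P \<otimes> Z) \<oplus> v \<otimes> Z \<oplus> (v \<otimes> L) \<otimes> w" using carr w_carrier by algebra
  then have eq: "X \<otimes> z i \<ominus> \<iota> (a * l_ext i) \<otimes> w [^] Suc p = (A \<otimes> Z) \<otimes> P \<oplus> v \<otimes> Z \<oplus> (v \<otimes> L) \<otimes> w"
    using carr lead PZ X_eq z_eq by (simp add: m_assoc)
  have "(A \<otimes> Z) \<otimes> P \<in> V (Suc p)" unfolding P_def
    by (rule V_gen) (auto simp: A_def Z_def intro: D_red_mult \<iota>_in_D_red z_red_in_D_red)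
  moreover have "v \<otimes> Z \<in> V (Suc p)"
    using V_rmult_commuting[OF z_red_in_D_red commutes_z_red_w v] V_mono[of p "Suc p"] by (simp add: Z_def)
  moreover have "(v \<otimes> L) \<otimes> w \<in> V (Suc p)"
    using V_rmult_w[OF V_rmult_\<iota>[OF v]] by (simp add: L_def)
  ultimately show ?thesis
    unfolding has_lead_def eq using X_carr z_carrier[OF i] by (auto intro: V_add)
qed

lemma has_lead_mult_z_pow:
  assumes i: "i < Suc k" and X: "has_lead X a p"
  shows "has_lead (X \<otimes> z i [^] (j::nat)) (a * l_ext i ^ j) (p + j)"
proof (induction j)
  case 0
  then show ?case using X by (simp add: has_lead_def)
next
  case (Suc j)
  have "has_lead (X \<otimes> z i [^] j \<otimes> z i) (a * l_ext i ^ j * l_ext i) (Suc (p + j))"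
    by (rule has_lead_mult_z[OF i Suc])
  then show ?case
    using X z_carrier[OF i] by (simp add: has_lead_def m_assoc power_Suc2 mult.assoc del: power_Suc)
qed

lemma has_lead_smonom:
  "m \<le> Suc k \<Longrightarrow> has_lead (smonom S z m \<alpha>) (monom_val l_ext m \<alpha>) (\<Sum>i<m. \<alpha> i)"
proof (induction m)
  case 0
  then show ?case by (simp add: has_lead_def \<iota>_one V_zero minus_eq r_neg)
next
  case (Suc m)
  then have "has_lead (smonom S z m \<alpha> \<otimes> z m [^] \<alpha> m) (monom_val l_ext m \<alpha> * l_ext m ^ \<alpha> m)
      ((\<Sum>i<m. \<alpha> i) + \<alpha> m)"
    by (intro has_lead_mult_z_pow) auto
  then show ?case by simp
qed

lemma has_lead_lmult: "has_lead X a p \<Longrightarrow> has_lead (\<iota> c \<otimes> X) (c * a) p"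
  unfolding has_lead_def
  using V_lmult[OF \<iota>_in_D_red, of "X \<ominus> \<iota> a \<otimes> w [^] p" p c]
  by (simp add: r_diff_distr \<iota>_mult m_assoc)

lemma has_lead_add: "has_lead X a p \<Longrightarrow> has_lead Y b p \<Longrightarrow> has_lead (X \<oplus> Y) (a + b) p"
proof -
  assume X: "has_lead X a p" and Y: "has_lead Y b p"
  have "X \<oplus> Y \<ominus> \<iota> (a + b) \<otimes> w [^] p = (X \<ominus> \<iota> a \<otimes> w [^] p) \<oplus> (Y \<ominus> \<iota> b \<otimes> w [^] p)"
    using X Y \<iota>_carrier[of a] \<iota>_carrier[of b] nat_pow_closed[OF w_carrier, of p]
    unfolding has_lead_def \<iota>_add by algebra
  then show ?thesis using X Y by (simp add: has_lead_def V_add)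
qed

lemma has_lead_finsum:
  "finite A \<Longrightarrow> (\<And>\<alpha>. \<alpha> \<in> A \<Longrightarrow> has_lead (f \<alpha>) (g \<alpha>) p) \<Longrightarrow> has_lead (finsum S f A) (\<Sum>\<alpha>\<in>A. g \<alpha>) p"
proof (induction A rule: finite_induct)
  case empty
  then show ?case by (simp add: has_lead_def V_zero minus_eq)
next
  case (insert x A)
  then have "f \<in> insert x A \<rightarrow> carrier S" by (auto simp: has_lead_def)
  then have "finsum S f (insert x A) = f x \<oplus> finsum S f A"
    using insert(1,2) by (simp add: finsum_insert)
  then show ?case using insert by (simp add: has_lead_add)
qed

lemma has_lead_raise:
  assumes X: "has_lead X a p" and "p < q"
  shows "has_lead X 0 q"
proof -
  have "X = (X \<ominus> \<iota> a \<otimes> w [^] p) \<oplus> \<iota> a \<otimes> w [^] p"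
    using X \<iota>_carrier[of a] nat_pow_closed[OF w_carrier, of p] unfolding has_lead_def by algebra
  moreover have "X \<ominus> \<iota> a \<otimes> w [^] p \<in> V q" using X V_mono[of p q] \<open>p < q\<close> by (simp add: has_lead_def)
  moreover have "\<iota> a \<otimes> w [^] p \<in> V q" using V_gen[OF \<iota>_in_D_red \<open>p < q\<close>] .
  ultimately have "X \<in> V q" by (metis V_add)
  then show ?thesis using X by (simp add: has_lead_def minus_eq)
qed

lemma pow_in_V_if_zero_has_lead:
  assumes "has_lead \<zero> u p" and "u \<noteq> 0"
  shows "w [^] p \<in> V p"
proof -
  have "\<ominus> (\<iota> u \<otimes> w [^] p) \<in> V p" using assms(1) by (simp add: has_lead_def minus_eq)
  then have "\<iota> u \<otimes> w [^] p \<in> V p" using V_uminus by fastforce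
  then have "\<iota> (inverse u) \<otimes> (\<iota> u \<otimes> w [^] p) \<in> V p" by (rule V_lmult[OF \<iota>_in_D_red])
  then show ?thesis using \<open>u \<noteq> 0\<close> by (simp add: \<iota>_one flip: m_assoc \<iota>_mult)
qed


lemma adjoin_subset_V:
  assumes w_pow: "w [^] (N::nat) \<in> V N"
  shows "adjoin z (Suc k) \<subseteq> V N"
proof -
  have mult_w: "x \<otimes> w \<in> V N" if x: "x \<in> V N" for x
  proof (rule V_rmult[OF w_carrier _ x])
    fix a j assume a: "a \<in> D_red" "j < N"
    then have eq: "(a \<otimes> w [^] j) \<otimes> w = a \<otimes> w [^] Suc j"
      using D_red_carrier by (auto simp: m_assoc)
    show "(a \<otimes> w [^] j) \<otimes> w \<in> V N"
    proof (cases "Suc j < N")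
      case True
      then show ?thesis unfolding eq by (rule V_gen[OF a(1)])
    next
      case False
      then have "Suc j = N" using a by simp
      then show ?thesis unfolding eq using V_lmult[OF a(1) w_pow] by simp
    qed
  qed
  have mult_z: "x \<otimes> z i \<in> V N" if x: "x \<in> V N" and i: "i < Suc k" for x i
  proof -
    have "x \<otimes> z i = x \<otimes> z_red i \<oplus> (x \<otimes> \<iota> (l_ext i)) \<otimes> w"
      using z_eq_z_red_plus[OF i] V_carrier[OF x] by (simp add: r_distr m_assoc)
    moreover have "x \<otimes> z_red i \<in> V N" by (rule V_rmult_commuting[OF z_red_in_D_red commutes_z_red_w x])
    moreover have "(x \<otimes> \<iota> (l_ext i)) \<otimes> w \<in> V N" by (rule mult_w[OF V_rmult_\<iota>[OF x]])
    ultimately show ?thesis by (simp add: V_add)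
  qed
  have one_in_V: "\<one> \<in> V N"
  proof (cases "N = 0")
    case True
    then show ?thesis using w_pow by simp
  next
    case False
    then have "\<one> \<otimes> w [^] (0::nat) \<in> V N" by (intro V_gen subringE(3)[OF D_red_subring]) simp
    then show ?thesis by simp
  qed
  show ?thesis unfolding adjoin_def
  proof (rule generate_ring_subset_if_rmult_closed)
    show "\<one> \<in> V N" by (fact one_in_V)
    show "range \<iota> \<union> z ` {..<Suc k} \<subseteq> carrier S" using z_carrier by auto
    show "V N \<subseteq> carrier S" using V_carrier by blast
    fix x g assume "x \<in> V N" "g \<in> range \<iota> \<union> z ` {..<Suc k}"
    then show "x \<otimes> g \<in> V N" using V_rmult_\<iota> mult_z by auto
  qed (simp_all add: V_add V_uminus)
qed

lemma has_lead_relation: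
  assumes "finite A" and deg: "\<And>\<alpha>. \<alpha> \<in> A \<Longrightarrow> (\<Sum>i<Suc k. \<alpha> i) \<le> N"
  shows "has_lead (finsum S (\<lambda>\<alpha>. \<iota> (c \<alpha>) \<otimes> smonom S z (Suc k) \<alpha>) A)
    (\<Sum>\<alpha>\<in>{\<alpha> \<in> A. (\<Sum>i<Suc k. \<alpha> i) = N}. c \<alpha> * monom_val l k \<alpha>) N"
proof -
  have "monom_val l_ext k \<alpha> = monom_val l k \<alpha>" for \<alpha>
    by (rule monom_val_cong) (simp add: l_ext_def)
  then have monom_lead: "has_lead (\<iota> (c \<alpha>) \<otimes> smonom S z (Suc k) \<alpha>) (c \<alpha> * monom_val l k \<alpha>) (\<Sum>i<Suc k. \<alpha> i)" for \<alpha>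
    using has_lead_lmult[OF has_lead_smonom[of "Suc k" \<alpha>]] by (simp add: l_ext_def)
  have "has_lead (\<iota> (c \<alpha>) \<otimes> smonom S z (Suc k) \<alpha>)
      (if (\<Sum>i<Suc k. \<alpha> i) = N then c \<alpha> * monom_val l k \<alpha> else 0) N" if "\<alpha> \<in> A" for \<alpha>
  proof (cases "(\<Sum>i<Suc k. \<alpha> i) = N")
    case False
    with deg[OF that] have "(\<Sum>i<Suc k. \<alpha> i) < N" by simp
    then show ?thesis using has_lead_raise[OF monom_lead] False by simp
  qed (use monom_lead[of \<alpha>] in \<open>simp only: refl if_True\<close>)
  from has_lead_finsum[OF \<open>finite A\<close> this] show ?thesis
    by (simp add: sum.inter_filter[OF \<open>finite A\<close>])
qed

end

lemma expvecs_eqI: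
  assumes "\<alpha> \<in> expvecs (Suc k)" "\<beta> \<in> expvecs (Suc k)" "\<forall>i<k. \<alpha> i = \<beta> i"
    and "(\<Sum>i<Suc k. \<alpha> i) = (\<Sum>i<Suc k. \<beta> i)"
  shows "\<alpha> = \<beta>"
proof
  fix i
  have "(\<Sum>i<k. \<alpha> i) = (\<Sum>i<k. \<beta> i)" using assms(3) by simp
  then have "\<alpha> k = \<beta> k" using assms(4) by simp
  then show "\<alpha> i = \<beta> i" using assms(1-3) by (cases "i < k"; cases "i = k") (auto simp: expvecs_def)
qed

context noether_setting
begin

lemma dependent_family_reduction:
  assumes family: "theta_family z (Suc k)" and dep: "\<not> alg_indep z (Suc k)"
  shows "\<exists>z' N. theta_family z' k \<and> adjoin z (Suc k) \<subseteq> lspan S (adjoin z' k) ((\<lambda>j. z k [^] (j::nat)) ` {..<N})"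
proof -
  obtain c :: "(nat \<Rightarrow> nat) \<Rightarrow> 'a" where c_fin: "finite {\<alpha>. c \<alpha> \<noteq> 0}"
    and c_supp: "\<forall>\<alpha>. c \<alpha> \<noteq> 0 \<longrightarrow> \<alpha> \<in> expvecs (Suc k)"
    and c_rel: "finsum S (\<lambda>\<alpha>. \<iota> (c \<alpha>) \<otimes> smonom S z (Suc k) \<alpha>) {\<alpha>. c \<alpha> \<noteq> 0} = \<zero>"
    and c_nonzero: "\<exists>\<alpha>. c \<alpha> \<noteq> 0"
    using dep unfolding alg_indep_def by blast
  define A where "A = {\<alpha>. c \<alpha> \<noteq> 0}"
  define deg where "deg \<alpha> = (\<Sum>i<Suc k. \<alpha> i)" for \<alpha> :: "nat \<Rightarrow> nat"
  define N where "N = Max (deg ` A)"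
  define top where "top = {\<alpha> \<in> A. deg \<alpha> = N}"
  have A_fin: "finite A" using c_fin by (simp add: A_def)
  have "A \<noteq> {}" using c_nonzero by (simp add: A_def)
  have deg_le: "deg \<alpha> \<le> N" if "\<alpha> \<in> A" for \<alpha>
    unfolding N_def using A_fin that by simp
  have "N \<in> deg ` A" unfolding N_def using A_fin \<open>A \<noteq> {}\<close> by simp
  then have "top \<noteq> {}" unfolding top_def by blast
  moreover have "finite top" "\<forall>\<alpha>\<in>top. c \<alpha> \<noteq> 0" using A_fin by (simp_all add: top_def A_def)
  moreover have "\<forall>\<alpha>\<in>top. \<forall>\<beta>\<in>top. (\<forall>i<k. \<alpha> i = \<beta> i) \<longrightarrow> \<alpha> = \<beta>"
    using c_supp expvecs_eqI[of _ k] unfolding top_def A_def deg_def by blast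
  ultimately obtain l where l: "\<forall>i<k. l i \<in> F" and u: "(\<Sum>\<alpha>\<in>top. c \<alpha> * monom_val l k \<alpha>) \<noteq> 0"
    using central_multipoly_nonroot[OF F_infinite F_central] by blast
  interpret step: noether_step S \<iota> \<theta> F z k l
    using family l by unfold_locales
  have "step.has_lead (finsum S (\<lambda>\<alpha>. \<iota> (c \<alpha>) \<otimes> smonom S z (Suc k) \<alpha>) A)
      (\<Sum>\<alpha>\<in>top. c \<alpha> * monom_val l k \<alpha>) N"
    using step.has_lead_relation[OF A_fin deg_le[unfolded deg_def]] unfolding top_def deg_def .
  then have "step.has_lead \<zero> (\<Sum>\<alpha>\<in>top. c \<alpha> * monom_val l k \<alpha>) N"
    using c_rel by (simp only: A_def)
  then have "step.w [^] N \<in> step.V N" using u by (rule step.pow_in_V_if_zero_has_lead)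
  then have "adjoin z (Suc k) \<subseteq> step.V N" by (rule step.adjoin_subset_V)
  then show ?thesis
    using step.theta_family_z_red unfolding step.V_def step.D_red_def step.w_def by blast
qed

theorem noether_normalization:
  "theta_family z k \<Longrightarrow> \<exists>m y H. theta_family y m \<and> alg_indep y m \<and> finite H \<and> H \<subseteq> carrier S
     \<and> adjoin z k \<subseteq> lspan S (adjoin y m) H"
proof (induction k arbitrary: z)
  have finite_over_itself: "adjoin z k \<subseteq> lspan S (adjoin z k) {\<one>}" if "theta_family z k" for z k
  proof
    fix x assume x: "x \<in> adjoin z k"
    then have "x \<otimes> \<one> \<in> lspan S (adjoin z k) {\<one>}" by (intro lspan.lspan_gen) auto
    then show "x \<in> lspan S (adjoin z k) {\<one>}" using x adjoin_carrier[OF that] by auto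
  qed
  { case 0
    then show ?case using finite_over_itself alg_indep_0 by blast }
  { case (Suc k)
    show ?case
    proof (cases "alg_indep z (Suc k)")
      case True
      then show ?thesis using finite_over_itself Suc.prems by blast
    next
      case False
      obtain z' N where z': "theta_family z' k"
        and sub: "adjoin z (Suc k) \<subseteq> lspan S (adjoin z' k) ((\<lambda>j. z k [^] (j::nat)) ` {..<N})"
        using dependent_family_reduction[OF Suc.prems False] by blast
      obtain m y H where y: "theta_family y m" "alg_indep y m" "finite H" "H \<subseteq> carrier S"
        and sub': "adjoin z' k \<subseteq> lspan S (adjoin y m) H"
        using Suc.IH[OF z'] by blast
      have pows: "(\<lambda>j. z k [^] (j::nat)) ` {..<N} \<subseteq> carrier S"
        using Suc.prems by (auto simp: theta_family_def)
      define H' where "H' = {h \<otimes> x |h x. h \<in> H \<and> x \<in> (\<lambda>j. z k [^] (j::nat)) ` {..<N}}"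
      have "adjoin z (Suc k) \<subseteq> lspan S (adjoin y m) H'"
        using sub lspan_trans[OF adjoin_subring[OF y(1)] y(4) pows sub'] unfolding H'_def by blast
      moreover have "finite H'" unfolding H'_def by (rule finite_image_set2) (use y(3) in auto)
      moreover have "H' \<subseteq> carrier S" unfolding H'_def using y(4) pows by auto
      ultimately show ?thesis using y by blast
    qed }
qed

end

section \<open>Quotients of skew polynomial rings\<close>

lemma funpow_fixed: "f c = c \<Longrightarrow> (f ^^ e) c = c"
  by (induction e) auto

lemma ring_aut_zero: "ring_aut f \<Longrightarrow> f 0 = 0"
  unfolding ring_aut_def by (metis add_cancel_right_right)

lemma ring_aut_funpow: "ring_aut f \<Longrightarrow> ring_aut (f ^^ e)"
proof -
  assume f: "ring_aut f"
  have "bij (f ^^ e)" using bij_betw_funpow[of f UNIV e] f by (simp add: ring_aut_def)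
  moreover have "(\<forall>x y. (f ^^ e) (x + y) = (f ^^ e) x + (f ^^ e) y)
      \<and> (\<forall>x y. (f ^^ e) (x * y) = (f ^^ e) x * (f ^^ e) y) \<and> (f ^^ e) 1 = 1"
    by (induction e) (use f in \<open>auto simp: ring_aut_def\<close>)
  ultimately show ?thesis by (simp add: ring_aut_def)
qed

lemma spow_cong: "(\<And>j. j < m \<Longrightarrow> \<alpha> j = \<beta> j) \<Longrightarrow> spow \<sigma> m \<alpha> = spow \<sigma> m \<beta>"
  by (induction m) auto

lemma spow_zero_exp [simp]: "spow \<sigma> m (\<lambda>_. 0) = id"
  by (induction m) auto

lemma spow_fixed: "(\<forall>i<m. \<sigma> i c = c) \<Longrightarrow> spow \<sigma> m \<alpha> c = c"
  by (induction m) (auto simp: funpow_fixed)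

lemma spow_one: "\<forall>i<m. ring_aut (\<sigma> i) \<Longrightarrow> spow \<sigma> m \<alpha> 1 = 1"
  by (rule spow_fixed) (auto simp: ring_aut_def)

lemma spow_zero: "\<forall>i<m. ring_aut (\<sigma> i) \<Longrightarrow> spow \<sigma> m \<alpha> 0 = 0"
  by (rule spow_fixed) (auto simp: ring_aut_zero)

definition exp_single :: "nat \<Rightarrow> nat \<Rightarrow> (nat \<Rightarrow> nat)" where
  "exp_single i e = (\<lambda>j. if j = i then e else 0)"

lemma exp_single_in_expvecs: "i < n \<Longrightarrow> exp_single i e \<in> expvecs n"
  by (simp add: exp_single_def expvecs_def)

lemma zero_in_expvecs: "(\<lambda>_. 0) \<in> expvecs n"
  by (simp add: expvecs_def)

lemma spow_exp_single: "i < m \<Longrightarrow> spow \<sigma> m (exp_single i e) = \<sigma> i ^^ e"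
proof (induction m)
  case (Suc m)
  show ?case
  proof (cases "i = m")
    case True
    then have "spow \<sigma> m (exp_single i e) = spow \<sigma> m (\<lambda>_. 0)"
      by (intro spow_cong) (simp add: exp_single_def)
    then show ?thesis using True by (simp add: exp_single_def)
  next
    case False
    then show ?thesis using Suc by (simp add: exp_single_def)
  qed
qed simp

definition skew_monom :: "'a::zero \<Rightarrow> (nat \<Rightarrow> nat) \<Rightarrow> ((nat \<Rightarrow> nat) \<Rightarrow> 'a)" where
  "skew_monom c \<alpha> = (\<lambda>\<gamma>. if \<gamma> = \<alpha> then c else 0)"

lemma skew_monom_carrier: "\<alpha> \<in> expvecs n \<Longrightarrow> skew_monom c \<alpha> \<in> carrier (skew_poly_ring \<sigma> n)"
  unfolding skew_poly_ring_def skew_monom_def by (auto intro: finite_subset[of _ "{\<alpha>}"])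

lemma skew_monom_mult:
  assumes aut: "\<forall>i<n. ring_aut (\<sigma> i)"
  shows "skew_monom a \<alpha> \<otimes>\<^bsub>skew_poly_ring \<sigma> n\<^esub> skew_monom b \<beta>
    = skew_monom (a * spow \<sigma> n \<alpha> b) (\<lambda>i. \<alpha> i + \<beta> i)"
proof
  fix \<gamma>
  let ?supp = "{\<alpha>'. skew_monom a \<alpha> \<alpha>' \<noteq> 0 \<and> (\<forall>i. \<alpha>' i \<le> \<gamma> i)}"
  have lhs: "(skew_monom a \<alpha> \<otimes>\<^bsub>skew_poly_ring \<sigma> n\<^esub> skew_monom b \<beta>) \<gamma>
      = (\<Sum>\<alpha>'\<in>?supp. skew_monom a \<alpha> \<alpha>' * spow \<sigma> n \<alpha>' (skew_monom b \<beta> (\<lambda>i. \<gamma> i - \<alpha>' i)))"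
    by (simp add: skew_poly_ring_def skew_mult_def)
  show "(skew_monom a \<alpha> \<otimes>\<^bsub>skew_poly_ring \<sigma> n\<^esub> skew_monom b \<beta>) \<gamma>
      = skew_monom (a * spow \<sigma> n \<alpha> b) (\<lambda>i. \<alpha> i + \<beta> i) \<gamma>"
  proof (cases "a \<noteq> 0 \<and> (\<forall>i. \<alpha> i \<le> \<gamma> i)")
    case True
    then have supp: "?supp = {\<alpha>}" by (auto simp: skew_monom_def)
    have "(\<lambda>i. \<gamma> i - \<alpha> i) = \<beta> \<longleftrightarrow> \<gamma> = (\<lambda>i. \<alpha> i + \<beta> i)"
      using True by (auto simp: fun_eq_iff) (metis add_diff_inverse_nat add_diff_cancel_left' not_le)+
    then show ?thesis unfolding lhs supp using spow_zero[OF aut] by (simp add: skew_monom_def)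
  next
    case False
    then have supp: "?supp = {}" by (auto simp: skew_monom_def)
    have "a = 0 \<or> \<gamma> \<noteq> (\<lambda>i. \<alpha> i + \<beta> i)" using False by auto
    then show ?thesis unfolding lhs supp by (auto simp: skew_monom_def)
  qed
qed

lemma one_eq_skew_monom: "\<one>\<^bsub>skew_poly_ring \<sigma> n\<^esub> = skew_monom 1 (\<lambda>_. 0)"
  by (simp add: skew_poly_ring_def skew_monom_def fun_eq_iff)

lemma const_poly_eq_skew_monom: "const_poly c = skew_monom c (\<lambda>_. 0)"
  by (simp add: const_poly_def skew_monom_def fun_eq_iff)

lemma finsum_skew_poly_ring:
  assumes "ring (skew_poly_ring \<sigma> n)"
  shows "finite A \<Longrightarrow> f \<in> A \<rightarrow> carrier (skew_poly_ring \<sigma> n) \<Longrightarrow>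
    finsum (skew_poly_ring \<sigma> n) f A = (\<lambda>\<gamma>. \<Sum>\<alpha>\<in>A. f \<alpha> \<gamma>)"
proof (induction A rule: finite_induct)
  interpret ring "skew_poly_ring \<sigma> n" by fact
  { case empty
    show ?case by (simp only: finsum_empty) (simp add: skew_poly_ring_def fun_eq_iff) }
  { case (insert x A)
    then have "finsum (skew_poly_ring \<sigma> n) f (insert x A)
        = f x \<oplus>\<^bsub>skew_poly_ring \<sigma> n\<^esub> finsum (skew_poly_ring \<sigma> n) f A"
      by (intro finsum_insert) auto
    then show ?case using insert by (simp add: skew_poly_ring_def fun_eq_iff) }
qed

lemma skew_poly_eq_finsum_monoms:
  assumes R: "ring (skew_poly_ring \<sigma> n)" and p: "p \<in> carrier (skew_poly_ring \<sigma> n)"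
  shows "p = finsum (skew_poly_ring \<sigma> n) (\<lambda>\<alpha>. skew_monom (p \<alpha>) \<alpha>) {\<alpha>. p \<alpha> \<noteq> 0}"
proof -
  have fin: "finite {\<alpha>. p \<alpha> \<noteq> 0}" and supp: "\<forall>\<alpha>. p \<alpha> \<noteq> 0 \<longrightarrow> \<alpha> \<in> expvecs n"
    using p by (auto simp: skew_poly_ring_def)
  have "finsum (skew_poly_ring \<sigma> n) (\<lambda>\<alpha>. skew_monom (p \<alpha>) \<alpha>) {\<alpha>. p \<alpha> \<noteq> 0}
      = (\<lambda>\<gamma>. \<Sum>\<alpha>\<in>{\<alpha>. p \<alpha> \<noteq> 0}. skew_monom (p \<alpha>) \<alpha> \<gamma>)"
    by (rule finsum_skew_poly_ring[OF R fin]) (use supp skew_monom_carrier in blast)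
  also have "\<dots> = p"
  proof
    fix \<gamma>
    show "(\<Sum>\<alpha>\<in>{\<alpha>. p \<alpha> \<noteq> 0}. skew_monom (p \<alpha>) \<alpha> \<gamma>) = p \<gamma>"
      unfolding skew_monom_def using fin by (simp add: sum.delta)
  qed
  finally show ?thesis by simp
qed

locale skew_quotient =
  fixes \<sigma> :: "nat \<Rightarrow> 'a::division_ring \<Rightarrow> 'a" and n :: nat and I and d :: "nat \<Rightarrow> nat" and \<theta> :: "'a \<Rightarrow> 'a"
  assumes aut: "\<forall>i<n. ring_aut (\<sigma> i)"
    and ideal: "ideal I (skew_poly_ring \<sigma> n)" and proper: "I \<noteq> carrier (skew_poly_ring \<sigma> n)"
    and d_pos: "\<forall>i<n. 0 < d i" and common_power: "\<forall>i<n. \<sigma> i ^^ d i = \<theta>"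
    and \<theta>_aut: "ring_aut \<theta>"
    and infinite_fixed_center: "infinite {x::'a. (\<forall>y. x * y = y * x) \<and> (\<forall>i<n. \<sigma> i x = x)}"
    and \<theta>_fixes: "\<forall>x\<in>{x::'a. (\<forall>y. x * y = y * x) \<and> (\<forall>i<n. \<sigma> i x = x)}. \<theta> x = x"
begin

abbreviation "R \<equiv> skew_poly_ring \<sigma> n"
abbreviation "Q \<equiv> R Quot I"

definition "\<pi> p = I +>\<^bsub>R\<^esub> p"
definition "\<iota> x = \<pi> (const_poly x)"
definition "z i = \<pi> (skew_monom 1 (exp_single i (d i)))"

text \<open>Associativity of \<open>R\<close>, which is where the commutation of the \<open>\<sigma> i\<close> matters, is part of
  the hypothesis that \<open>I\<close> is an ideal of \<open>R\<close>.\<close>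

lemma R_ring: "ring R"
  using ideal ideal.axioms(2) by blast

lemma Q_ring: "ring Q"
  using ideal ideal.quotient_is_ring by blast

lemma \<pi>_hom: "\<pi> \<in> ring_hom R Q"
  unfolding \<pi>_def[abs_def] using ideal.rcos_ring_hom[OF ideal] by simp

lemma \<pi>_carrier: "p \<in> carrier R \<Longrightarrow> \<pi> p \<in> carrier Q"
  by (rule ring_hom_closed[OF \<pi>_hom])

lemma \<pi>_add: "p \<in> carrier R \<Longrightarrow> q \<in> carrier R \<Longrightarrow> \<pi> (p \<oplus>\<^bsub>R\<^esub> q) = \<pi> p \<oplus>\<^bsub>Q\<^esub> \<pi> q"
  by (rule ring_hom_add[OF \<pi>_hom])

lemma \<pi>_mult: "p \<in> carrier R \<Longrightarrow> q \<in> carrier R \<Longrightarrow> \<pi> (p \<otimes>\<^bsub>R\<^esub> q) = \<pi> p \<otimes>\<^bsub>Q\<^esub> \<pi> q"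
  by (rule ring_hom_mult[OF \<pi>_hom])

lemma \<pi>_one: "\<pi> \<one>\<^bsub>R\<^esub> = \<one>\<^bsub>Q\<^esub>"
  by (rule ring_hom_one[OF \<pi>_hom])

lemma \<pi>_zero: "\<pi> \<zero>\<^bsub>R\<^esub> = \<zero>\<^bsub>Q\<^esub>"
  by (rule ring_hom_zero[OF \<pi>_hom R_ring Q_ring])

lemma \<pi>_surj: "s \<in> carrier Q \<Longrightarrow> \<exists>p\<in>carrier R. s = \<pi> p"
  by (auto simp: FactRing_def A_RCOSETS_def' \<pi>_def)

lemma \<pi>_skew_monom_mult:
  "\<alpha> \<in> expvecs n \<Longrightarrow> \<beta> \<in> expvecs n \<Longrightarrow>
    \<pi> (skew_monom a \<alpha>) \<otimes>\<^bsub>Q\<^esub> \<pi> (skew_monom b \<beta>) = \<pi> (skew_monom (a * spow \<sigma> n \<alpha> b) (\<lambda>i. \<alpha> i + \<beta> i))"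
  by (simp flip: \<pi>_mult skew_monom_mult[OF aut] add: skew_monom_carrier)

lemma const_poly_carrier: "const_poly x \<in> carrier R"
  unfolding const_poly_eq_skew_monom by (rule skew_monom_carrier[OF zero_in_expvecs])

lemma \<iota>_carrier: "\<iota> x \<in> carrier Q"
  unfolding \<iota>_def using \<pi>_carrier const_poly_carrier by blast

lemma \<iota>_add: "\<iota> (x + y) = \<iota> x \<oplus>\<^bsub>Q\<^esub> \<iota> y"
proof -
  have "const_poly (x + y) = const_poly x \<oplus>\<^bsub>R\<^esub> const_poly y"
    by (simp add: skew_poly_ring_def const_poly_def fun_eq_iff)
  then show ?thesis unfolding \<iota>_def using \<pi>_add const_poly_carrier by simp
qed

lemma \<iota>_mult: "\<iota> (x * y) = \<iota> x \<otimes>\<^bsub>Q\<^esub> \<iota> y"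
  unfolding \<iota>_def const_poly_eq_skew_monom using \<pi>_skew_monom_mult zero_in_expvecs by simp

lemma \<iota>_one: "\<iota> 1 = \<one>\<^bsub>Q\<^esub>"
  using \<pi>_one unfolding \<iota>_def const_poly_eq_skew_monom one_eq_skew_monom .

lemma Q_one_neq_zero: "\<one>\<^bsub>Q\<^esub> \<noteq> \<zero>\<^bsub>Q\<^esub>"
proof
  interpret ideal I R by (rule ideal)
  assume "\<one>\<^bsub>Q\<^esub> = \<zero>\<^bsub>Q\<^esub>"
  then have "I +>\<^bsub>R\<^esub> \<one>\<^bsub>R\<^esub> = I" by (simp add: FactRing_def)
  moreover have "\<one>\<^bsub>R\<^esub> \<in> I +>\<^bsub>R\<^esub> \<one>\<^bsub>R\<^esub>" by (rule a_rcos_self) simp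
  ultimately show False using one_imp_carrier proper by simp
qed

lemma z_carrier: "i < n \<Longrightarrow> z i \<in> carrier Q"
  unfolding z_def by (rule \<pi>_carrier[OF skew_monom_carrier[OF exp_single_in_expvecs]])

lemma z_comm: "i < n \<Longrightarrow> j < n \<Longrightarrow> z i \<otimes>\<^bsub>Q\<^esub> z j = z j \<otimes>\<^bsub>Q\<^esub> z i"
  unfolding z_def by (simp add: \<pi>_skew_monom_mult exp_single_in_expvecs spow_one[OF aut] add.commute)

lemma z_\<iota>: "i < n \<Longrightarrow> z i \<otimes>\<^bsub>Q\<^esub> \<iota> b = \<iota> (\<theta> b) \<otimes>\<^bsub>Q\<^esub> z i"
  unfolding z_def \<iota>_def const_poly_eq_skew_monom
  by (simp add: \<pi>_skew_monom_mult exp_single_in_expvecs zero_in_expvecs spow_exp_single common_power)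

end

sublocale skew_quotient \<subseteq> setting: noether_setting Q \<iota> \<theta> "{x::'a. (\<forall>y. x * y = y * x) \<and> (\<forall>i<n. \<sigma> i x = x)}"
proof (intro noether_setting.intro Q_ring noether_setting_axioms.intro)
  show "\<theta> 1 = 1" using \<theta>_aut by (simp add: ring_aut_def)
qed (use \<iota>_carrier \<iota>_add \<iota>_mult \<iota>_one Q_one_neq_zero infinite_fixed_center \<theta>_fixes in auto)

context skew_quotient
begin

lemma theta_family_z: "setting.theta_family z n"
  unfolding setting.theta_family_def using z_carrier z_comm z_\<iota> by blast

lemma adjoin_z_subring: "subring (setting.adjoin z n) Q"
  by (rule setting.adjoin_subring[OF theta_family_z])

lemma pow_z: "i < n \<Longrightarrow> \<pi> (skew_monom 1 (exp_single i (j * d i))) = z i [^]\<^bsub>Q\<^esub> j"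
proof (induction j)
  case 0
  then show ?case using \<pi>_one by (simp add: one_eq_skew_monom exp_single_def)
next
  case (Suc j)
  have "(\<lambda>k. exp_single i (j * d i) k + exp_single i (d i) k) = exp_single i (Suc j * d i)"
    by (simp add: exp_single_def fun_eq_iff)
  then have "\<pi> (skew_monom 1 (exp_single i (Suc j * d i)))
      = \<pi> (skew_monom 1 (exp_single i (j * d i))) \<otimes>\<^bsub>Q\<^esub> z i"
    unfolding z_def using Suc.prems
    by (simp add: \<pi>_skew_monom_mult exp_single_in_expvecs spow_one[OF aut])
  then show ?case using Suc by simp
qed

lemma multiple_monom_in_adjoin:
  "m \<le> n \<Longrightarrow> \<pi> (skew_monom 1 (\<lambda>i. if i < m then q i * d i else 0)) \<in> setting.adjoin z n"
proof (induction m)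
  case 0
  then show ?case using \<pi>_one subringE(3)[OF adjoin_z_subring] by (simp add: one_eq_skew_monom)
next
  case (Suc m)
  have "(\<lambda>i. (if i < m then q i * d i else 0) + exp_single m (q m * d m) i)
      = (\<lambda>i. if i < Suc m then q i * d i else 0)"
    by (auto simp: exp_single_def fun_eq_iff)
  moreover have "(\<lambda>i. if i < m then q i * d i else 0) \<in> expvecs n"
    using Suc.prems by (auto simp: expvecs_def)
  ultimately have "\<pi> (skew_monom 1 (\<lambda>i. if i < Suc m then q i * d i else 0))
      = \<pi> (skew_monom 1 (\<lambda>i. if i < m then q i * d i else 0))
        \<otimes>\<^bsub>Q\<^esub> \<pi> (skew_monom 1 (exp_single m (q m * d m)))"
    using Suc.prems by (simp add: \<pi>_skew_monom_mult exp_single_in_expvecs spow_one[OF aut])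
  also have "\<pi> (skew_monom 1 (exp_single m (q m * d m))) = z m [^]\<^bsub>Q\<^esub> q m"
    using Suc.prems by (simp add: pow_z)
  finally show ?case
    using Suc subringE(6)[OF adjoin_z_subring] setting.in_adjoin[of m n z]
      setting.subring_nat_pow_closed[OF adjoin_z_subring] by simp
qed

definition "low_exps = {r \<in> expvecs n. \<forall>i<n. r i < d i}"
definition "low_monoms = (\<lambda>r. \<pi> (skew_monom 1 r)) ` low_exps"

lemma finite_low_exps: "finite low_exps"
proof -
  have "low_exps \<subseteq> (\<lambda>f i. if i < n then f i else 0) ` (PiE {..<n} (\<lambda>i. {..<d i}))"
  proof
    fix r assume r: "r \<in> low_exps"
    then have "r = (\<lambda>i. if i < n then restrict r {..<n} i else 0)"
      by (auto simp: low_exps_def expvecs_def fun_eq_iff)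
    moreover have "restrict r {..<n} \<in> PiE {..<n} (\<lambda>i. {..<d i})" using r by (auto simp: low_exps_def)
    ultimately show "r \<in> (\<lambda>f i. if i < n then f i else 0) ` (PiE {..<n} (\<lambda>i. {..<d i}))" by blast
  qed
  moreover have "finite (PiE {..<n} (\<lambda>i. {..<d i}))" by (rule finite_PiE) auto
  ultimately show ?thesis using finite_subset by blast
qed

lemma low_monoms_carrier: "low_monoms \<subseteq> carrier Q"
  unfolding low_monoms_def low_exps_def using \<pi>_carrier skew_monom_carrier by blast

text \<open>Division with remainder of the exponents: \<open>c t\<^sup>\<alpha> = (c t\<^sup>q\<^sup>d) t\<^sup>r\<close> with \<open>r i < d i\<close>,
  and \<open>t\<^sup>q\<^sup>d\<close> is a monomial in the \<open>z i\<close>.\<close>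

lemma skew_monom_in_span:
  assumes \<alpha>: "\<alpha> \<in> expvecs n"
  shows "\<pi> (skew_monom c \<alpha>) \<in> lspan Q (setting.adjoin z n) low_monoms"
proof -
  define qd where "qd = (\<lambda>i. if i < n then \<alpha> i div d i * d i else 0)"
  define r where "r i = \<alpha> i mod d i" for i
  have "\<alpha> = (\<lambda>i. qd i + r i)"
    using \<alpha> by (auto simp: qd_def r_def expvecs_def fun_eq_iff)
  moreover have "r \<in> low_exps" using d_pos \<alpha> by (auto simp: low_exps_def r_def expvecs_def)
  moreover have "qd \<in> expvecs n" by (simp add: qd_def expvecs_def)
  ultimately have "\<pi> (skew_monom c \<alpha>) = (\<iota> c \<otimes>\<^bsub>Q\<^esub> \<pi> (skew_monom 1 qd)) \<otimes>\<^bsub>Q\<^esub> \<pi> (skew_monom 1 r)"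
    unfolding \<iota>_def const_poly_eq_skew_monom
    by (simp add: \<pi>_skew_monom_mult zero_in_expvecs low_exps_def spow_one[OF aut])
  moreover have "\<iota> c \<otimes>\<^bsub>Q\<^esub> \<pi> (skew_monom 1 qd) \<in> setting.adjoin z n"
    unfolding qd_def
    by (rule subringE(6)[OF adjoin_z_subring setting.\<iota>_in_adjoin multiple_monom_in_adjoin]) simp
  moreover have "\<pi> (skew_monom 1 r) \<in> low_monoms" using \<open>r \<in> low_exps\<close> by (simp add: low_monoms_def)
  ultimately show ?thesis by (simp add: lspan.lspan_gen)
qed

lemma Q_in_span:
  assumes s: "s \<in> carrier Q"
  shows "s \<in> lspan Q (setting.adjoin z n) low_monoms"
proof -
  interpret R: ring R by (rule R_ring)
  obtain p where p: "p \<in> carrier R" "s = \<pi> p" using \<pi>_surj[OF s] by blast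
  have supp: "finite {\<alpha>. p \<alpha> \<noteq> 0}" "\<forall>\<alpha>. p \<alpha> \<noteq> 0 \<longrightarrow> \<alpha> \<in> expvecs n"
    using p by (auto simp: skew_poly_ring_def)
  have "\<pi> (finsum R (\<lambda>\<alpha>. skew_monom (p \<alpha>) \<alpha>) A) \<in> lspan Q (setting.adjoin z n) low_monoms"
    if "finite A" "A \<subseteq> {\<alpha>. p \<alpha> \<noteq> 0}" for A
    using that
  proof (induction A rule: finite_induct)
    case empty
    then show ?case using \<pi>_zero by (simp add: lspan.lspan_zero)
  next
    case (insert x A)
    have carr: "(\<lambda>\<alpha>. skew_monom (p \<alpha>) \<alpha>) \<in> insert x A \<rightarrow> carrier R"
      using insert supp by (auto intro!: skew_monom_carrier)
    then have "\<pi> (finsum R (\<lambda>\<alpha>. skew_monom (p \<alpha>) \<alpha>) (insert x A))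
        = \<pi> (skew_monom (p x) x) \<oplus>\<^bsub>Q\<^esub> \<pi> (finsum R (\<lambda>\<alpha>. skew_monom (p \<alpha>) \<alpha>) A)"
      using insert(1,2) by (simp add: R.finsum_insert \<pi>_add R.finsum_closed)
    moreover have "\<pi> (skew_monom (p x) x) \<in> lspan Q (setting.adjoin z n) low_monoms"
      using insert supp by (intro skew_monom_in_span) auto
    ultimately show ?case using insert by (simp add: lspan.lspan_add)
  qed
  from this[OF supp(1) subset_refl] show ?thesis
    using p(2) skew_poly_eq_finsum_monoms[OF R_ring p(1)] by metis
qed

lemma normalizable:
  assumes central: "central \<longrightarrow> \<theta> = id"
  shows "normalizable_over central Q \<iota>"
proof -
  obtain m y H where y: "setting.theta_family y m" "setting.alg_indep y m" "finite H" "H \<subseteq> carrier Q"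
    and sub: "setting.adjoin z n \<subseteq> lspan Q (setting.adjoin y m) H"
    using setting.noether_normalization[OF theta_family_z] by blast
  define G where "G = {h \<otimes>\<^bsub>Q\<^esub> x |h x. h \<in> H \<and> x \<in> low_monoms}"
  have G_fin: "finite G" unfolding G_def
    by (rule finite_image_set2) (use y(3) finite_low_exps in \<open>simp_all add: low_monoms_def\<close>)
  have G_carr: "G \<subseteq> carrier Q" unfolding G_def using y(4) low_monoms_carrier by blast
  have span: "\<exists>r. r \<in> G \<rightarrow> generate_ring Q (range \<iota> \<union> y ` {..<m}) \<and> s = finsum Q (\<lambda>g. r g \<otimes>\<^bsub>Q\<^esub> g) G"
    if "s \<in> carrier Q" for s
  proof -
    have "s \<in> lspan Q (setting.adjoin y m) G" unfolding G_def
      by (rule setting.lspan_trans[OF setting.adjoin_subring[OF y(1)] y(4) low_monoms_carrier sub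
            Q_in_span[OF that]])
    from setting.lspan_imp_finsum[OF setting.adjoin_subring[OF y(1)] G_fin G_carr this]
    show ?thesis unfolding setting.adjoin_def .
  qed
  show ?thesis unfolding normalizable_over_def
  proof (intro exI[of _ m] exI[of _ y] exI[of _ "\<lambda>_. \<theta>"] conjI)
    show "\<exists>G. finite G \<and> G \<subseteq> carrier Q \<and> (\<forall>s\<in>carrier Q. \<exists>r. r \<in> G \<rightarrow> generate_ring Q (range \<iota> \<union> y ` {..<m})
        \<and> s = finsum Q (\<lambda>g. r g \<otimes>\<^bsub>Q\<^esub> g) G)"
      using G_fin G_carr span by blast
    show "\<forall>c. finite {\<alpha>. c \<alpha> \<noteq> 0} \<and> (\<forall>\<alpha>. c \<alpha> \<noteq> 0 \<longrightarrow> \<alpha> \<in> expvecs m) \<and>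
        finsum Q (\<lambda>\<alpha>. \<iota> (c \<alpha>) \<otimes>\<^bsub>Q\<^esub> smonom Q y m \<alpha>) {\<alpha>. c \<alpha> \<noteq> 0} = \<zero>\<^bsub>Q\<^esub> \<longrightarrow> (\<forall>\<alpha>. c \<alpha> = 0)"
      using y(2) unfolding setting.alg_indep_def .
  qed (use y(1) \<theta>_aut central in \<open>simp_all add: setting.theta_family_def\<close>)
qed

end

lemma common_power_aut:
  fixes \<sigma> :: "nat \<Rightarrow> 'a::ring_1 \<Rightarrow> 'a" and n :: nat
  assumes aut: "\<forall>i<n. ring_aut (\<sigma> i)" and eq: "\<forall>i<n. \<forall>j<n. \<sigma> i ^^ d i = \<sigma> j ^^ d j"
  shows "\<exists>\<theta>. ring_aut \<theta> \<and> (\<forall>i<n. \<sigma> i ^^ d i = \<theta>) \<and> (\<forall>x. (\<forall>i<n. \<sigma> i x = x) \<longrightarrow> \<theta> x = x)"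
proof (cases "n = 0")
  case True
  then show ?thesis by (intro exI[of _ id]) (simp add: ring_aut_def)
next
  case False
  then have "ring_aut (\<sigma> 0 ^^ d 0)" using aut ring_aut_funpow by blast
  moreover have "\<forall>i<n. \<sigma> i ^^ d i = \<sigma> 0 ^^ d 0" using eq False by blast
  moreover have "(\<sigma> 0 ^^ d 0) x = x" if "\<forall>i<n. \<sigma> i x = x" for x
    using that False funpow_fixed[of "\<sigma> 0" x] by blast
  ultimately show ?thesis by blast
qed

lemma tuple_normalizable_if_common_power:
  fixes \<sigma> :: "nat \<Rightarrow> 'a::division_ring \<Rightarrow> 'a"
  assumes "\<forall>i<n. ring_aut (\<sigma> i)"
    and "infinite {x::'a. (\<forall>y. x * y = y * x) \<and> (\<forall>i<n. \<sigma> i x = x)}"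
    and "\<forall>i<n. 0 < d i" and "\<forall>i<n. \<sigma> i ^^ d i = \<theta>" and "ring_aut \<theta>"
    and "\<forall>x. (\<forall>i<n. \<sigma> i x = x) \<longrightarrow> \<theta> x = x"
    and central: "central \<longrightarrow> \<theta> = id"
  shows "tuple_normalizable central n \<sigma>"
  unfolding tuple_normalizable_def
proof (intro allI impI)
  fix I assume "ideal I (skew_poly_ring \<sigma> n) \<and> I \<noteq> carrier (skew_poly_ring \<sigma> n)"
  then interpret skew_quotient \<sigma> n I d \<theta>
    by (intro skew_quotient.intro) (use assms in simp_all)
  show "normalizable_over central (skew_poly_ring \<sigma> n Quot I) (\<lambda>d. I +>\<^bsub>skew_poly_ring \<sigma> n\<^esub> const_poly d)"
    using normalizable[OF central] unfolding \<iota>_def[abs_def] \<pi>_def .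
qed

theorem corollary3p8:
  fixes \<sigma> :: "nat \<Rightarrow> 'a::division_ring \<Rightarrow> 'a" and n :: nat
  assumes aut: "\<forall>i<n. ring_aut (\<sigma> i)"
    and comm: "\<forall>i<n. \<forall>j<n. \<sigma> i \<circ> \<sigma> j = \<sigma> j \<circ> \<sigma> i"
    and inf: "infinite {x::'a. (\<forall>y. x * y = y * x) \<and> (\<forall>i<n. \<sigma> i x = x)}"
  shows "((\<exists>d::nat \<Rightarrow> nat. (\<forall>i<n. 0 < d i) \<and> (\<forall>i<n. \<forall>j<n. \<sigma> i ^^ d i = \<sigma> j ^^ d j))
            \<longrightarrow> tuple_aut_normalizable n \<sigma>)
       \<and> ((\<forall>i<n. \<exists>k>0. \<sigma> i ^^ k = id) \<longrightarrow> tuple_central_normalizable n \<sigma>)"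
proof (intro conjI impI)
  assume "\<exists>d::nat \<Rightarrow> nat. (\<forall>i<n. 0 < d i) \<and> (\<forall>i<n. \<forall>j<n. \<sigma> i ^^ d i = \<sigma> j ^^ d j)"
  then obtain d :: "nat \<Rightarrow> nat" where d_pos: "\<forall>i<n. 0 < d i"
    and d_eq: "\<forall>i<n. \<forall>j<n. \<sigma> i ^^ d i = \<sigma> j ^^ d j" by blast
  obtain \<theta> where "ring_aut \<theta>" "\<forall>i<n. \<sigma> i ^^ d i = \<theta>" "\<forall>x. (\<forall>i<n. \<sigma> i x = x) \<longrightarrow> \<theta> x = x"
    using common_power_aut[OF aut d_eq] by blast
  then show "tuple_aut_normalizable n \<sigma>"
    by (intro tuple_normalizable_if_common_power[OF aut inf d_pos]) simp_all
next
  assume "\<forall>i<n. \<exists>k>0. \<sigma> i ^^ k = id"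
  then obtain d where "\<forall>i<n. 0 < d i \<and> \<sigma> i ^^ d i = id" by metis
  then show "tuple_central_normalizable n \<sigma>"
    by (intro tuple_normalizable_if_common_power[OF aut inf, of d id]) (simp_all add: ring_aut_def)
qed

end
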